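(* Let $A$ be an associative unital algebra and $(H,\pi,\psi)$ a left twisting datum for $A$. Let $A^H=\{a\in A: h\cdot a=\varepsilon(h)a\ \forall h\in H\}$ and $A^{co(H)}=\{a\in A: a_{(-1)}\otimes a_{(0)}=1\otimes a\}$. Then $A^H$ is a subalgebra which is a left $H$-comodule algebra (by restricting $\psi$) and $A^{co(H)}$ is a subalgebra which is a left $H$-module algebra (by restricting $\pi$). If moreover $ab=ba$ for all $a\in A^{co(H)}$ and $b\in A^H$, then the map $A^{co(H)}\blacktriangleright\!\!<A^H\to(A,\star)$, $a\blacktriangleright\!\!<b\mapsto ab$, is an algebra map.
   Context: Work over a field $k$; $H$ a bialgebra, $\Delta(h)=h_1\otimes h_2$. A left twisting datum $(H,\pi,\psi)$ for $A$: $A$ is a left $H$-module algebra ($\pi(h\otimes a)=h\cdot a$, $h\cdot(ab)=(h_1\cdot a)(h_2\cdot b)$, $h\cdot1=\varepsilon(h)1$) and a left $H$-comodule algebra ($\psi(a)=a_{(-1)}\otimes a_{(0)}$ an algebra map) with $(h\cdot a)_{(-1)}\otimes(h\cdot a)_{(0)}=a_{(-1)}\otimes h\cdot a_{(0)}$; the left twisted product is $a\star b=a_{(0)}(a_{(-1)}\cdot b)$. For a left $H$-module algebra $M$ and left $H$-comodule algebra $N$ (coaction $n\mapsto n_{(-1)}\otimes n_{(0)}$), the generalized smash product $M\blacktriangleright\!\!<N$ is $M\otimes N$ with product $(m\blacktriangleright\!\!<n)(m'\blacktriangleright\!\!<n')=m(n_{(-1)}\cdot m')\blacktriangleright\!\!<n_{(0)}n'$.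 *)

theory Defs
  imports Main "HOL.Vector_Spaces"
begin

text \<open>An element of a tensor product V (x) W is represented by a finite list of
pairs (v_i, w_i), standing for the sum of the v_i (x) w_i.  Two such lists
represent the same tensor iff the difference of their formal sums in the free
k-vector space on V x W lies in the k-span of the bilinearity relations.
Vector spaces are subsets (carriers) of types carrying a k-scalar action.\<close>

definition delta :: "'p \<Rightarrow> 'p \<Rightarrow> 'k::field" where
  "delta p = (\<lambda>q. if q = p then 1 else 0)"

definition fsum :: "'p list \<Rightarrow> 'p \<Rightarrow> 'k::field" where
  "fsum xs = (\<lambda>q. \<Sum>p\<leftarrow>xs. delta p q)"

definition lin_span :: "('p \<Rightarrow> 'k::field) set \<Rightarrow> ('p \<Rightarrow> 'k) set" where
  "lin_span R = {f. \<exists>cs. snd ` set cs \<subseteq> R \<and> f = (\<lambda>q. \<Sum>(c, r)\<leftarrow>cs. c * r q)}"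

definition rel2 :: "('k::field \<Rightarrow> 'v::ab_group_add \<Rightarrow> 'v) \<Rightarrow> ('k \<Rightarrow> 'w::ab_group_add \<Rightarrow> 'w)
    \<Rightarrow> 'v set \<Rightarrow> 'w set \<Rightarrow> ('v \<times> 'w \<Rightarrow> 'k) set" where
  "rel2 sV sW V W =
     {\<lambda>q. delta (v + v', w) q - delta (v, w) q - delta (v', w) q | v v' w. v \<in> V \<and> v' \<in> V \<and> w \<in> W}
   \<union> {\<lambda>q. delta (v, w + w') q - delta (v, w) q - delta (v, w') q | v w w'. v \<in> V \<and> w \<in> W \<and> w' \<in> W}
   \<union> {\<lambda>q. delta (sV c v, w) q - c * delta (v, w) q | c v w. v \<in> V \<and> w \<in> W}
   \<union> {\<lambda>q. delta (v, sW c w) q - c * delta (v, w) q | c v w. v \<in> V \<and> w \<in> W}"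

definition tensor2_eq :: "('k::field \<Rightarrow> 'v::ab_group_add \<Rightarrow> 'v) \<Rightarrow> ('k \<Rightarrow> 'w::ab_group_add \<Rightarrow> 'w)
    \<Rightarrow> 'v set \<Rightarrow> 'w set \<Rightarrow> ('v \<times> 'w) list \<Rightarrow> ('v \<times> 'w) list \<Rightarrow> bool" where
  "tensor2_eq sV sW V W xs ys \<longleftrightarrow>
     set xs \<subseteq> V \<times> W \<and> set ys \<subseteq> V \<times> W \<and>
     (\<lambda>q. fsum xs q - fsum ys q) \<in> lin_span (rel2 sV sW V W)"

definition rel3 :: "('k::field \<Rightarrow> 'u::ab_group_add \<Rightarrow> 'u) \<Rightarrow> ('k \<Rightarrow> 'v::ab_group_add \<Rightarrow> 'v)
    \<Rightarrow> ('k \<Rightarrow> 'w::ab_group_add \<Rightarrow> 'w) \<Rightarrow> 'u set \<Rightarrow> 'v set \<Rightarrow> 'w set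
    \<Rightarrow> ('u \<times> 'v \<times> 'w \<Rightarrow> 'k) set" where
  "rel3 sU sV sW U V W =
     {\<lambda>q. delta (u + u', v, w) q - delta (u, v, w) q - delta (u', v, w) q
        | u u' v w. u \<in> U \<and> u' \<in> U \<and> v \<in> V \<and> w \<in> W}
   \<union> {\<lambda>q. delta (u, v + v', w) q - delta (u, v, w) q - delta (u, v', w) q
        | u v v' w. u \<in> U \<and> v \<in> V \<and> v' \<in> V \<and> w \<in> W}
   \<union> {\<lambda>q. delta (u, v, w + w') q - delta (u, v, w) q - delta (u, v, w') q
        | u v w w'. u \<in> U \<and> v \<in> V \<and> w \<in> W \<and> w' \<in> W}
   \<union> {\<lambda>q. delta (sU c u, v, w) q - c * delta (u, v, w) q | c u v w. u \<in> U \<and> v \<in> V \<and> w \<in> W}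
   \<union> {\<lambda>q. delta (u, sV c v, w) q - c * delta (u, v, w) q | c u v w. u \<in> U \<and> v \<in> V \<and> w \<in> W}
   \<union> {\<lambda>q. delta (u, v, sW c w) q - c * delta (u, v, w) q | c u v w. u \<in> U \<and> v \<in> V \<and> w \<in> W}"

definition tensor3_eq :: "('k::field \<Rightarrow> 'u::ab_group_add \<Rightarrow> 'u) \<Rightarrow> ('k \<Rightarrow> 'v::ab_group_add \<Rightarrow> 'v)
    \<Rightarrow> ('k \<Rightarrow> 'w::ab_group_add \<Rightarrow> 'w) \<Rightarrow> 'u set \<Rightarrow> 'v set \<Rightarrow> 'w set
    \<Rightarrow> ('u \<times> 'v \<times> 'w) list \<Rightarrow> ('u \<times> 'v \<times> 'w) list \<Rightarrow> bool" where
  "tensor3_eq sU sV sW U V W xs ys \<longleftrightarrow>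
     set xs \<subseteq> U \<times> V \<times> W \<and> set ys \<subseteq> U \<times> V \<times> W \<and>
     (\<lambda>q. fsum xs q - fsum ys q) \<in> lin_span (rel3 sU sV sW U V W)"

definition k_algebra :: "('k::field \<Rightarrow> 'r::ring_1 \<Rightarrow> 'r) \<Rightarrow> bool" where
  "k_algebra s \<longleftrightarrow> vector_space s \<and> (\<forall>c x y. s c (x * y) = s c x * y \<and> s c (x * y) = x * s c y)"

definition subalgebra :: "('k::field \<Rightarrow> 'r::ring_1 \<Rightarrow> 'r) \<Rightarrow> 'r set \<Rightarrow> bool" where
  "subalgebra s S \<longleftrightarrow> 0 \<in> S \<and> 1 \<in> S \<and> (\<forall>x\<in>S. \<forall>y\<in>S. x + y \<in> S \<and> x * y \<in> S) \<and>
     (\<forall>c. \<forall>x\<in>S. s c x \<in> S)"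

text \<open>Bialgebra (H, Delta, epsilon); Delta h is a list of pairs representing
h_1 (x) h_2 in H (x) H.\<close>
definition bialgebra :: "('k::field \<Rightarrow> 'h::ring_1 \<Rightarrow> 'h) \<Rightarrow> ('h \<Rightarrow> ('h \<times> 'h) list) \<Rightarrow> ('h \<Rightarrow> 'k) \<Rightarrow> bool" where
  "bialgebra sH \<Delta> \<epsilon> \<longleftrightarrow> k_algebra sH \<and>
     (\<forall>x y. tensor2_eq sH sH UNIV UNIV (\<Delta> (x + y)) (\<Delta> x @ \<Delta> y)) \<and>
     (\<forall>c x. tensor2_eq sH sH UNIV UNIV (\<Delta> (sH c x)) (map (\<lambda>(a, b). (sH c a, b)) (\<Delta> x))) \<and>
     (\<forall>x y. \<epsilon> (x + y) = \<epsilon> x + \<epsilon> y) \<and> (\<forall>c x. \<epsilon> (sH c x) = c * \<epsilon> x) \<and>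
     (\<forall>h. tensor3_eq sH sH sH UNIV UNIV UNIV
            [(a1, a2, b). (a, b) \<leftarrow> \<Delta> h, (a1, a2) \<leftarrow> \<Delta> a]
            [(a, b1, b2). (a, b) \<leftarrow> \<Delta> h, (b1, b2) \<leftarrow> \<Delta> b]) \<and>
     (\<forall>h. (\<Sum>(a, b)\<leftarrow>\<Delta> h. sH (\<epsilon> a) b) = h) \<and>
     (\<forall>h. (\<Sum>(a, b)\<leftarrow>\<Delta> h. sH (\<epsilon> b) a) = h) \<and>
     (\<forall>x y. tensor2_eq sH sH UNIV UNIV (\<Delta> (x * y)) [(a * c, b * d). (a, b) \<leftarrow> \<Delta> x, (c, d) \<leftarrow> \<Delta> y]) \<and>
     tensor2_eq sH sH UNIV UNIV (\<Delta> 1) [(1, 1)] \<and>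
     (\<forall>x y. \<epsilon> (x * y) = \<epsilon> x * \<epsilon> y) \<and> \<epsilon> 1 = 1"

definition module_algebra :: "('k::field \<Rightarrow> 'h::ring_1 \<Rightarrow> 'h) \<Rightarrow> ('h \<Rightarrow> ('h \<times> 'h) list) \<Rightarrow> ('h \<Rightarrow> 'k)
    \<Rightarrow> ('k \<Rightarrow> 'a::ring_1 \<Rightarrow> 'a) \<Rightarrow> 'a set \<Rightarrow> ('h \<Rightarrow> 'a \<Rightarrow> 'a) \<Rightarrow> bool" where
  "module_algebra sH \<Delta> \<epsilon> sA M \<pi> \<longleftrightarrow>
     (\<forall>h. \<forall>m\<in>M. \<pi> h m \<in> M) \<and>
     (\<forall>h g. \<forall>m\<in>M. \<pi> (h + g) m = \<pi> h m + \<pi> g m) \<and>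
     (\<forall>c h. \<forall>m\<in>M. \<pi> (sH c h) m = sA c (\<pi> h m)) \<and>
     (\<forall>h. \<forall>m\<in>M. \<forall>n\<in>M. \<pi> h (m + n) = \<pi> h m + \<pi> h n) \<and>
     (\<forall>h c. \<forall>m\<in>M. \<pi> h (sA c m) = sA c (\<pi> h m)) \<and>
     (\<forall>m\<in>M. \<pi> 1 m = m) \<and>
     (\<forall>h g. \<forall>m\<in>M. \<pi> (h * g) m = \<pi> h (\<pi> g m)) \<and>
     (\<forall>h. \<forall>m\<in>M. \<forall>n\<in>M. \<pi> h (m * n) = (\<Sum>(h1, h2)\<leftarrow>\<Delta> h. \<pi> h1 m * \<pi> h2 n)) \<and>
     (\<forall>h. \<pi> h 1 = sA (\<epsilon> h) 1)"

text \<open>N (a subset of A) is a left H-comodule algebra via psi; psi n is a list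
of pairs representing n_(-1) (x) n_(0) in H (x) N.\<close>
definition comodule_algebra :: "('k::field \<Rightarrow> 'h::ring_1 \<Rightarrow> 'h) \<Rightarrow> ('h \<Rightarrow> ('h \<times> 'h) list) \<Rightarrow> ('h \<Rightarrow> 'k)
    \<Rightarrow> ('k \<Rightarrow> 'a::ring_1 \<Rightarrow> 'a) \<Rightarrow> 'a set \<Rightarrow> ('a \<Rightarrow> ('h \<times> 'a) list) \<Rightarrow> bool" where
  "comodule_algebra sH \<Delta> \<epsilon> sA N \<psi> \<longleftrightarrow>
     (\<forall>n\<in>N. set (\<psi> n) \<subseteq> UNIV \<times> N) \<and>
     (\<forall>m\<in>N. \<forall>n\<in>N. tensor2_eq sH sA UNIV N (\<psi> (m + n)) (\<psi> m @ \<psi> n)) \<and>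
     (\<forall>c. \<forall>n\<in>N. tensor2_eq sH sA UNIV N (\<psi> (sA c n)) (map (\<lambda>(h, a). (sH c h, a)) (\<psi> n))) \<and>
     (\<forall>n\<in>N. tensor3_eq sH sH sA UNIV UNIV N
            [(h, g, b). (h, a) \<leftarrow> \<psi> n, (g, b) \<leftarrow> \<psi> a]
            [(h1, h2, a). (h, a) \<leftarrow> \<psi> n, (h1, h2) \<leftarrow> \<Delta> h]) \<and>
     (\<forall>n\<in>N. (\<Sum>(h, a)\<leftarrow>\<psi> n. sA (\<epsilon> h) a) = n) \<and>
     (\<forall>m\<in>N. \<forall>n\<in>N. tensor2_eq sH sA UNIV N (\<psi> (m * n)) [(h * g, a * b). (h, a) \<leftarrow> \<psi> m, (g, b) \<leftarrow> \<psi> n]) \<and>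
     tensor2_eq sH sA UNIV N (\<psi> 1) [(1, 1)]"

definition left_twisting_datum :: "('k::field \<Rightarrow> 'h::ring_1 \<Rightarrow> 'h) \<Rightarrow> ('h \<Rightarrow> ('h \<times> 'h) list) \<Rightarrow> ('h \<Rightarrow> 'k)
    \<Rightarrow> ('k \<Rightarrow> 'a::ring_1 \<Rightarrow> 'a) \<Rightarrow> ('h \<Rightarrow> 'a \<Rightarrow> 'a) \<Rightarrow> ('a \<Rightarrow> ('h \<times> 'a) list) \<Rightarrow> bool" where
  "left_twisting_datum sH \<Delta> \<epsilon> sA \<pi> \<psi> \<longleftrightarrow>
     bialgebra sH \<Delta> \<epsilon> \<and> k_algebra sA \<and>
     module_algebra sH \<Delta> \<epsilon> sA UNIV \<pi> \<and> comodule_algebra sH \<Delta> \<epsilon> sA UNIV \<psi> \<and>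
     (\<forall>h a. tensor2_eq sH sA UNIV UNIV (\<psi> (\<pi> h a)) [(g, \<pi> h b). (g, b) \<leftarrow> \<psi> a])"

definition invariants :: "('k::field \<Rightarrow> 'a \<Rightarrow> 'a) \<Rightarrow> ('h \<Rightarrow> 'k) \<Rightarrow> ('h \<Rightarrow> 'a \<Rightarrow> 'a) \<Rightarrow> 'a set" where
  "invariants sA \<epsilon> \<pi> = {a. \<forall>h. \<pi> h a = sA (\<epsilon> h) a}"

definition coinvariants :: "('k::field \<Rightarrow> 'h::ring_1 \<Rightarrow> 'h) \<Rightarrow> ('k \<Rightarrow> 'a::ab_group_add \<Rightarrow> 'a)
    \<Rightarrow> ('a \<Rightarrow> ('h \<times> 'a) list) \<Rightarrow> 'a set" where
  "coinvariants sH sA \<psi> = {a. tensor2_eq sH sA UNIV UNIV (\<psi> a) [(1, a)]}"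

definition twisted_prod :: "('h \<Rightarrow> 'a::ring_1 \<Rightarrow> 'a) \<Rightarrow> ('a \<Rightarrow> ('h \<times> 'a) list) \<Rightarrow> 'a \<Rightarrow> 'a \<Rightarrow> 'a" where
  "twisted_prod \<pi> \<psi> a b = (\<Sum>(g, c)\<leftarrow>\<psi> a. c * \<pi> g b)"

definition smash_mult :: "('h \<Rightarrow> 'a::ring_1 \<Rightarrow> 'a) \<Rightarrow> ('a \<Rightarrow> ('h \<times> 'a) list)
    \<Rightarrow> ('a \<times> 'a) list \<Rightarrow> ('a \<times> 'a) list \<Rightarrow> ('a \<times> 'a) list" where
  "smash_mult \<pi> \<psi> xs ys =
     concat [[(m * \<pi> g m', c * n'). (g, c) \<leftarrow> \<psi> n]. (m, n) \<leftarrow> xs, (m', n') \<leftarrow> ys]"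

definition mult_map :: "('a::ring_1 \<times> 'a) list \<Rightarrow> 'a" where
  "mult_map xs = (\<Sum>(m, n)\<leftarrow>xs. m * n)"

end

theory Submission
  imports Defs "HOL-Library.Function_Algebras"
begin

(*
  Tensors are lists of pairs modulo the span of the bilinearity relations, so every map out of
  a tensor product is well defined as soon as it respects the generating relations; this
  universal property is proved once and used throughout.

  A^H is closed under products because (h_1 . a)(h_2 . b) = eps(h_1) eps(h_2) a b and Delta is
  counital; A^co(H) is closed under pi because psi(h . a) = a_(-1) (x) h . a_(0).  For the
  coaction on A^H, expand a_(-1) in a basis (e) of H: psi(a) = sum_e e (x) a_e, and comparing
  coordinates in psi(h . a) = psi(eps(h) a) shows that every a_e is invariant.  Since A^H is a
  direct summand of A, the maps H (x) A^H -> H (x) A and H (x) H (x) A^H -> H (x) H (x) A are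
  injective, so the comodule algebra axioms of A restrict to A^H.

  Finally, for a in A^co(H) and b in A^H we have psi(ab) = b_(-1) (x) a b_(0), and
  h . (a' b') = (h . a') b' for b' invariant (counit), hence
  (ab) * (a'b') = a b_(0) (b_(-1) . a') b' = a (b_(-1) . a') b_(0) b',
  using that b_(0) in A^H commutes with b_(-1) . a' in A^co(H).
*)

section \<open>Linear maps out of tensor products\<close>

definition supp :: "('p \<Rightarrow> 'k::zero) \<Rightarrow> 'p set" where
  "supp f = {p. f p \<noteq> 0}"

text \<open>The linear extension of B to the free vector space on 'p, evaluated on a function
  supported in the finite set S.\<close>

definition lin_ext ::
    "('k \<Rightarrow> 'b \<Rightarrow> 'b) \<Rightarrow> ('p \<Rightarrow> 'b) \<Rightarrow> 'p set \<Rightarrow> ('p \<Rightarrow> 'k) \<Rightarrow> 'b::comm_monoid_add"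
  where "lin_ext s B S f = (\<Sum>p\<in>S. s (f p) (B p))"

lemma fsum_Nil [simp]: "fsum [] = (\<lambda>q. 0)"
  by (simp add: fsum_def)

lemma fsum_Cons: "fsum (x # xs) = (\<lambda>q. delta x q + fsum xs q)"
  by (simp add: fsum_def)

lemma fsum_append: "fsum (xs @ ys) = (\<lambda>q. fsum xs q + fsum ys q)"
  by (simp add: fsum_def)

lemma supp_delta_diff_diff: "supp (\<lambda>q. delta a q - delta b q - delta c q :: 'k::field) \<subseteq> {a, b, c}"
  unfolding supp_def delta_def by auto

lemma supp_delta_diff_mult: "supp (\<lambda>q. delta a q - (d::'k::field) * delta b q) \<subseteq> {a, b}"
  unfolding supp_def delta_def by auto

context vector_space
begin

lemma lin_ext_delta: "finite S \<Longrightarrow> x \<in> S \<Longrightarrow> lin_ext scale B S (delta x) = B x"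
  unfolding lin_ext_def delta_def
  by (simp add: if_distrib[of "\<lambda>c. scale c _"] cong: if_cong)

lemma lin_ext_add: "lin_ext scale B S (\<lambda>q. f q + g q) = lin_ext scale B S f + lin_ext scale B S g"
  unfolding lin_ext_def by (simp add: scale_left_distrib sum.distrib)

lemma lin_ext_diff: "lin_ext scale B S (\<lambda>q. f q - g q) = lin_ext scale B S f - lin_ext scale B S g"
  unfolding lin_ext_def by (simp add: scale_left_diff_distrib sum_subtractf)

lemma lin_ext_cmult: "lin_ext scale B S (\<lambda>q. c * f q) = scale c (lin_ext scale B S f)"
  unfolding lin_ext_def by (simp add: scale_sum_right)

lemma lin_ext_zero [simp]: "lin_ext scale B S (\<lambda>q. 0) = 0"
  by (simp add: lin_ext_def)

lemma lin_ext_lincomb: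
  "lin_ext scale B S (\<lambda>q. \<Sum>(c, r)\<leftarrow>cs. c * r q) = (\<Sum>(c, r)\<leftarrow>cs. scale c (lin_ext scale B S r))"
  by (induction cs) (auto simp: lin_ext_add lin_ext_cmult)

lemma lin_ext_fsum: "finite S \<Longrightarrow> set xs \<subseteq> S \<Longrightarrow> lin_ext scale B S (fsum xs) = (\<Sum>p\<leftarrow>xs. B p)"
  by (induction xs) (simp_all add: fsum_Cons lin_ext_add lin_ext_delta)

lemma lin_ext_superset:
  "finite T \<Longrightarrow> supp f \<subseteq> S \<Longrightarrow> S \<subseteq> T \<Longrightarrow> lin_ext scale B T f = lin_ext scale B S f"
  unfolding lin_ext_def supp_def by (rule sum.mono_neutral_right) auto

lemma lin_ext_delta_diff_diff:
  assumes "finite S" "supp (\<lambda>q. delta a q - delta b q - delta c q :: 'a) \<subseteq> S"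
  shows "lin_ext scale B S (\<lambda>q. delta a q - delta b q - delta c q) = B a - B b - B c"
proof -
  have "lin_ext scale B S (\<lambda>q. delta a q - delta b q - delta c q)
      = lin_ext scale B (S \<union> {a, b, c}) (\<lambda>q. delta a q - delta b q - delta c q)"
    using assms by (intro lin_ext_superset[symmetric]) auto
  also have "\<dots> = B a - B b - B c"
    using assms by (simp add: lin_ext_diff[where f = "\<lambda>q. delta a q - delta b q"] lin_ext_diff
        lin_ext_delta del: lin_ext_diff[where f = "\<lambda>q. delta a q"])
  finally show ?thesis .
qed

lemma lin_ext_delta_diff_mult:
  assumes "finite S" "supp (\<lambda>q. delta a q - d * delta b q) \<subseteq> S"
  shows "lin_ext scale B S (\<lambda>q. delta a q - d * delta b q) = B a - scale d (B b)"
proof -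
  have "lin_ext scale B S (\<lambda>q. delta a q - d * delta b q)
      = lin_ext scale B (S \<union> {a, b}) (\<lambda>q. delta a q - d * delta b q)"
    using assms by (intro lin_ext_superset[symmetric]) auto
  also have "\<dots> = B a - scale d (B b)"
    using assms by (simp add: lin_ext_diff lin_ext_cmult[where f = "delta b"] lin_ext_delta)
  finally show ?thesis .
qed

lemma sum_list_diff_in_subspace_if_lin_span:
  assumes P: "subspace P"
    and R: "\<And>r S. r \<in> R \<Longrightarrow> finite S \<Longrightarrow> supp r \<subseteq> S \<Longrightarrow> lin_ext scale B S r \<in> P"
    and R_finite: "\<And>r. r \<in> R \<Longrightarrow> finite (supp r)"
    and xs_ys: "(\<lambda>q. fsum xs q - fsum ys q) \<in> lin_span R"
  shows "(\<Sum>p\<leftarrow>xs. B p) - (\<Sum>p\<leftarrow>ys. B p) \<in> P"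
proof -
  obtain cs where cs: "snd ` set cs \<subseteq> R"
    and cs_eq: "(\<lambda>q. fsum xs q - fsum ys q) = (\<lambda>q. \<Sum>(c, r)\<leftarrow>cs. c * r q)"
    using xs_ys unfolding lin_span_def by blast
  define S where "S = set xs \<union> set ys \<union> (\<Union>r\<in>snd ` set cs. supp r)"
  have S: "finite S" "set xs \<subseteq> S" "set ys \<subseteq> S"
    unfolding S_def using cs R_finite by auto
  have "(\<Sum>p\<leftarrow>xs. B p) - (\<Sum>p\<leftarrow>ys. B p) = lin_ext scale B S (\<lambda>q. fsum xs q - fsum ys q)"
    using S by (simp add: lin_ext_diff lin_ext_fsum)
  also have "\<dots> = (\<Sum>(c, r)\<leftarrow>cs. scale c (lin_ext scale B S r))"
    by (simp add: cs_eq lin_ext_lincomb)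
  also have "\<dots> \<in> P"
  proof -
    have "lin_ext scale B S r \<in> P" if "(c, r) \<in> set cs" for c r
      using that cs S(1) by (intro R) (force simp: S_def)+
    then show ?thesis
      by (induction cs)
         (auto intro!: subspace_add[OF P] subspace_scale[OF P] simp: subspace_0[OF P])
  qed
  finally show ?thesis .
qed

lemma sum_list_diff_in_subspace_if_tensor2_eq:
  assumes P: "subspace P"
    and "\<And>v v' w. v \<in> V \<Longrightarrow> v' \<in> V \<Longrightarrow> w \<in> W \<Longrightarrow> B (v + v', w) - B (v, w) - B (v', w) \<in> P"
    and "\<And>v w w'. v \<in> V \<Longrightarrow> w \<in> W \<Longrightarrow> w' \<in> W \<Longrightarrow> B (v, w + w') - B (v, w) - B (v, w') \<in> P"
    and "\<And>c v w. v \<in> V \<Longrightarrow> w \<in> W \<Longrightarrow> B (sV c v, w) - scale c (B (v, w)) \<in> P"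
    and "\<And>c v w. v \<in> V \<Longrightarrow> w \<in> W \<Longrightarrow> B (v, sW c w) - scale c (B (v, w)) \<in> P"
    and "tensor2_eq sV sW V W xs ys"
  shows "(\<Sum>p\<leftarrow>xs. B p) - (\<Sum>p\<leftarrow>ys. B p) \<in> P"
proof (rule sum_list_diff_in_subspace_if_lin_span[OF P])
  show "(\<lambda>q. fsum xs q - fsum ys q) \<in> lin_span (rel2 sV sW V W)"
    using assms(6) unfolding tensor2_eq_def by blast
qed (use assms in \<open>auto simp: rel2_def lin_ext_delta_diff_diff lin_ext_delta_diff_mult
       intro: finite_subset[OF supp_delta_diff_diff] finite_subset[OF supp_delta_diff_mult]\<close>)

lemma sum_list_diff_in_subspace_if_tensor3_eq:
  assumes P: "subspace P"
    and "\<And>u u' v w. u \<in> U \<Longrightarrow> u' \<in> U \<Longrightarrow> v \<in> V \<Longrightarrow> w \<in> W \<Longrightarrow>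
      B (u + u', v, w) - B (u, v, w) - B (u', v, w) \<in> P"
    and "\<And>u v v' w. u \<in> U \<Longrightarrow> v \<in> V \<Longrightarrow> v' \<in> V \<Longrightarrow> w \<in> W \<Longrightarrow>
      B (u, v + v', w) - B (u, v, w) - B (u, v', w) \<in> P"
    and "\<And>u v w w'. u \<in> U \<Longrightarrow> v \<in> V \<Longrightarrow> w \<in> W \<Longrightarrow> w' \<in> W \<Longrightarrow>
      B (u, v, w + w') - B (u, v, w) - B (u, v, w') \<in> P"
    and "\<And>c u v w. u \<in> U \<Longrightarrow> v \<in> V \<Longrightarrow> w \<in> W \<Longrightarrow> B (sU c u, v, w) - scale c (B (u, v, w)) \<in> P"
    and "\<And>c u v w. u \<in> U \<Longrightarrow> v \<in> V \<Longrightarrow> w \<in> W \<Longrightarrow> B (u, sV c v, w) - scale c (B (u, v, w)) \<in> P"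
    and "\<And>c u v w. u \<in> U \<Longrightarrow> v \<in> V \<Longrightarrow> w \<in> W \<Longrightarrow> B (u, v, sW c w) - scale c (B (u, v, w)) \<in> P"
    and "tensor3_eq sU sV sW U V W xs ys"
  shows "(\<Sum>p\<leftarrow>xs. B p) - (\<Sum>p\<leftarrow>ys. B p) \<in> P"
proof (rule sum_list_diff_in_subspace_if_lin_span[OF P])
  show "(\<lambda>q. fsum xs q - fsum ys q) \<in> lin_span (rel3 sU sV sW U V W)"
    using assms(8) unfolding tensor3_eq_def by blast
qed (use assms in \<open>auto simp: rel3_def lin_ext_delta_diff_diff lin_ext_delta_diff_mult
       intro: finite_subset[OF supp_delta_diff_diff] finite_subset[OF supp_delta_diff_mult]\<close>)

lemma sum_list_eq_if_tensor2_eq: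
  assumes "\<And>v v' w. v \<in> V \<Longrightarrow> v' \<in> V \<Longrightarrow> w \<in> W \<Longrightarrow> B (v + v', w) = B (v, w) + B (v', w)"
    and "\<And>v w w'. v \<in> V \<Longrightarrow> w \<in> W \<Longrightarrow> w' \<in> W \<Longrightarrow> B (v, w + w') = B (v, w) + B (v, w')"
    and "\<And>c v w. v \<in> V \<Longrightarrow> w \<in> W \<Longrightarrow> B (sV c v, w) = scale c (B (v, w))"
    and "\<And>c v w. v \<in> V \<Longrightarrow> w \<in> W \<Longrightarrow> B (v, sW c w) = scale c (B (v, w))"
    and "tensor2_eq sV sW V W xs ys"
  shows "(\<Sum>p\<leftarrow>xs. B p) = (\<Sum>p\<leftarrow>ys. B p)"
proof -
  have "(\<Sum>p\<leftarrow>xs. B p) - (\<Sum>p\<leftarrow>ys. B p) \<in> {0}"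
    using assms by (intro sum_list_diff_in_subspace_if_tensor2_eq[OF subspace_single_0]) simp_all
  then show ?thesis by simp
qed

end

section \<open>Congruence of representatives\<close>

text \<open>With R = rel2 sV sW V W and c = 1 this is tensor2_eq without the carrier conditions;
  the scalar c expresses the scaling relations, e.g. [(sV c v, w)] is congruent to c times
  [(v, w)].\<close>

definition cong_mod :: "('q \<Rightarrow> 'k::field) set \<Rightarrow> 'k \<Rightarrow> 'q list \<Rightarrow> 'q list \<Rightarrow> bool" where
  "cong_mod R c xs ys \<longleftrightarrow> (\<lambda>q. fsum xs q - c * fsum ys q) \<in> lin_span R"

lemma vector_space_fun: "vector_space (\<lambda>(c::'k::field) (f::'q \<Rightarrow> 'k). (\<lambda>q. c * f q))"
  by unfold_locales (auto simp: fun_eq_iff algebra_simps)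

lemma lin_span_zero: "(\<lambda>q. 0) \<in> lin_span R"
  unfolding lin_span_def by (rule CollectI, rule exI[of _ "[]"]) auto

lemma lin_span_base: "r \<in> R \<Longrightarrow> r \<in> lin_span R"
  unfolding lin_span_def by (rule CollectI, rule exI[of _ "[(1, r)]"]) auto

lemma lin_span_add:
  fixes f :: "'q \<Rightarrow> 'k::field"
  assumes "f \<in> lin_span R" "g \<in> lin_span R"
  shows "(\<lambda>q. f q + g q) \<in> lin_span R"
proof -
  obtain cs ds where "snd ` set cs \<subseteq> R" "snd ` set ds \<subseteq> R"
    and "f = (\<lambda>q. \<Sum>(c, r)\<leftarrow>cs. c * r q)" "g = (\<lambda>q. \<Sum>(c, r)\<leftarrow>ds. c * r q)"
    using assms unfolding lin_span_def by blast
  then show ?thesis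
    unfolding lin_span_def by (intro CollectI exI[of _ "cs @ ds"]) auto
qed

lemma lin_span_cmult:
  fixes f :: "'q \<Rightarrow> 'k::field"
  assumes "f \<in> lin_span R"
  shows "(\<lambda>q. a * f q) \<in> lin_span R"
proof -
  obtain cs where cs: "snd ` set cs \<subseteq> R" "f = (\<lambda>q. \<Sum>(c, r)\<leftarrow>cs. c * r q)"
    using assms unfolding lin_span_def by blast
  have "a * (\<Sum>(c, r)\<leftarrow>cs. c * r q) = (\<Sum>(c, r)\<leftarrow>map (\<lambda>(c, r). (a * c, r)) cs. c * r q)" for q
    by (induction cs) (auto simp: algebra_simps)
  with cs show ?thesis
    unfolding lin_span_def by (intro CollectI exI[of _ "map (\<lambda>(c, r). (a * c, r)) cs"]) force
qed

lemma lin_span_diff: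
  assumes "f \<in> lin_span R" "g \<in> lin_span R"
  shows "(\<lambda>q. f q - g q) \<in> lin_span R"
  using lin_span_add[OF assms(1) lin_span_cmult[OF assms(2), of "-1"]] by simp

lemma subspace_lin_span:
  "module.subspace (\<lambda>(c::'k::field) (f::'q \<Rightarrow> 'k). (\<lambda>q. c * f q)) (lin_span R)"
proof -
  interpret vector_space "\<lambda>(c::'k::field) (f::'q \<Rightarrow> 'k). (\<lambda>q. c * f q)"
    by (rule vector_space_fun)
  show ?thesis
    by (rule subspaceI)
       (auto simp: zero_fun_def plus_fun_def lin_span_zero lin_span_add lin_span_cmult)
qed

lemma fsum_concat: "fsum (concat (map \<phi> xs)) = (\<Sum>p\<leftarrow>xs. fsum (\<phi> p))"
  by (induction xs) (auto simp: fsum_append plus_fun_def zero_fun_def)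

lemma cong_mod_refl: "cong_mod R 1 xs xs"
  unfolding cong_mod_def using lin_span_zero by simp

lemma cong_mod_Nil: "cong_mod R c [] []"
  unfolding cong_mod_def using lin_span_zero by simp

lemma cong_mod_sym: "cong_mod R 1 xs ys \<Longrightarrow> cong_mod R 1 ys xs"
  unfolding cong_mod_def by (drule lin_span_cmult[of _ R "-1"]) (simp add: algebra_simps)

lemma cong_mod_trans:
  assumes "cong_mod R c xs ys" "cong_mod R d ys zs"
  shows "cong_mod R (c * d) xs zs"
proof -
  have "(\<lambda>q. (fsum xs q - c * fsum ys q) + c * (fsum ys q - d * fsum zs q)) \<in> lin_span R"
    using assms unfolding cong_mod_def by (intro lin_span_add lin_span_cmult)
  then show ?thesis
    unfolding cong_mod_def by (simp add: algebra_simps)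
qed

lemma cong_mod_trans_one [trans]: "cong_mod R 1 xs ys \<Longrightarrow> cong_mod R 1 ys zs \<Longrightarrow> cong_mod R 1 xs zs"
  using cong_mod_trans[of R 1 xs ys 1 zs] by simp

lemma cong_mod_join: "cong_mod R c xs zs \<Longrightarrow> cong_mod R c ys zs \<Longrightarrow> cong_mod R 1 xs ys"
  unfolding cong_mod_def by (drule (1) lin_span_diff) simp

lemma cong_mod_append:
  assumes "cong_mod R c xs ys" "cong_mod R c xs' ys'"
  shows "cong_mod R c (xs @ xs') (ys @ ys')"
proof -
  have "(\<lambda>q. (fsum xs q - c * fsum ys q) + (fsum xs' q - c * fsum ys' q)) \<in> lin_span R"
    using assms unfolding cong_mod_def by (rule lin_span_add)
  then show ?thesis
    unfolding cong_mod_def by (simp add: fsum_append algebra_simps)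
qed

lemma cong_mod_concat_map:
  "(\<And>x. x \<in> set l \<Longrightarrow> cong_mod R c (f x) (g x)) \<Longrightarrow> cong_mod R c (concat (map f l)) (concat (map g l))"
  by (induction l) (auto simp: cong_mod_Nil cong_mod_append)

lemma cong_mod_map:
  "(\<And>x. x \<in> set l \<Longrightarrow> cong_mod R c [f x] [g x]) \<Longrightarrow> cong_mod R c (map f l) (map g l)"
  using cong_mod_concat_map[of l R c "\<lambda>x. [f x]" "\<lambda>x. [g x]"] by simp

lemma cong_mod_map_append:
  assumes "\<And>x. x \<in> set l \<Longrightarrow> cong_mod R c [f x] [g x, h x]"
  shows "cong_mod R c (map f l) (map g l @ map h l)"
proof -
  have "cong_mod R c (map f l) (concat (map (\<lambda>x. [g x, h x]) l))"
    using cong_mod_concat_map[of l R c "\<lambda>x. [f x]"] assms by simp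
  moreover have "fsum (concat (map (\<lambda>x. [g x, h x]) l)) = fsum (map g l @ map h l)"
    by (induction l) (auto simp: fsum_Cons fsum_append fun_eq_iff algebra_simps)
  ultimately show ?thesis
    unfolding cong_mod_def by metis
qed

lemma cong_mod_base: "r \<in> R \<Longrightarrow> (\<lambda>q. fsum xs q - c * fsum ys q) = r \<Longrightarrow> cong_mod R c xs ys"
  unfolding cong_mod_def using lin_span_base by metis

lemma tensor2_eq_iff_cong_mod:
  "tensor2_eq sV sW V W xs ys \<longleftrightarrow>
    set xs \<subseteq> V \<times> W \<and> set ys \<subseteq> V \<times> W \<and> cong_mod (rel2 sV sW V W) 1 xs ys"
  unfolding tensor2_eq_def cong_mod_def by simp

lemma tensor3_eq_iff_cong_mod:
  "tensor3_eq sU sV sW U V W xs ys \<longleftrightarrow>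
    set xs \<subseteq> U \<times> V \<times> W \<and> set ys \<subseteq> U \<times> V \<times> W \<and> cong_mod (rel3 sU sV sW U V W) 1 xs ys"
  unfolding tensor3_eq_def cong_mod_def by simp

lemma tensor2_eq_UNIV: "tensor2_eq sV sW UNIV UNIV xs ys \<longleftrightarrow> cong_mod (rel2 sV sW UNIV UNIV) 1 xs ys"
  unfolding tensor2_eq_iff_cong_mod by simp

lemma tensor3_eq_UNIV:
  "tensor3_eq sU sV sW UNIV UNIV UNIV xs ys \<longleftrightarrow> cong_mod (rel3 sU sV sW UNIV UNIV UNIV) 1 xs ys"
  unfolding tensor3_eq_iff_cong_mod by simp

context
  fixes sV :: "'k::field \<Rightarrow> 'v::ab_group_add \<Rightarrow> 'v" and sW :: "'k \<Rightarrow> 'w::ab_group_add \<Rightarrow> 'w"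
begin

lemma cong_mod_rel2_add_left:
  "v \<in> V \<Longrightarrow> v' \<in> V \<Longrightarrow> w \<in> W \<Longrightarrow> cong_mod (rel2 sV sW V W) 1 [(v + v', w)] [(v, w), (v', w)]"
  by (rule cong_mod_base[of "\<lambda>q. delta (v + v', w) q - delta (v, w) q - delta (v', w) q"])
     (unfold rel2_def, fast, simp add: fsum_def fun_eq_iff)

lemma cong_mod_rel2_add_right:
  "v \<in> V \<Longrightarrow> w \<in> W \<Longrightarrow> w' \<in> W \<Longrightarrow> cong_mod (rel2 sV sW V W) 1 [(v, w + w')] [(v, w), (v, w')]"
  by (rule cong_mod_base[of "\<lambda>q. delta (v, w + w') q - delta (v, w) q - delta (v, w') q"])
     (unfold rel2_def, fast, simp add: fsum_def fun_eq_iff)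

lemma cong_mod_rel2_scale_left:
  "v \<in> V \<Longrightarrow> w \<in> W \<Longrightarrow> cong_mod (rel2 sV sW V W) c [(sV c v, w)] [(v, w)]"
  by (rule cong_mod_base[of "\<lambda>q. delta (sV c v, w) q - c * delta (v, w) q"])
     (unfold rel2_def, fast, simp add: fsum_def fun_eq_iff)

lemma cong_mod_rel2_scale_right:
  "v \<in> V \<Longrightarrow> w \<in> W \<Longrightarrow> cong_mod (rel2 sV sW V W) c [(v, sW c w)] [(v, w)]"
  by (rule cong_mod_base[of "\<lambda>q. delta (v, sW c w) q - c * delta (v, w) q"])
     (unfold rel2_def, fast, simp add: fsum_def fun_eq_iff)

lemma cong_mod_rel2_zero_left: "0 \<in> V \<Longrightarrow> w \<in> W \<Longrightarrow> cong_mod (rel2 sV sW V W) 1 [(0, w)] []"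
  using cong_mod_rel2_add_left[of 0 V 0 w W]
  unfolding cong_mod_def by (auto dest: lin_span_cmult[of _ _ "-1"] simp: fsum_def)

lemma cong_mod_rel2_zero_right: "v \<in> V \<Longrightarrow> 0 \<in> W \<Longrightarrow> cong_mod (rel2 sV sW V W) 1 [(v, 0)] []"
  using cong_mod_rel2_add_right[of v V 0 W 0]
  unfolding cong_mod_def by (auto dest: lin_span_cmult[of _ _ "-1"] simp: fsum_def)

lemma cong_mod_rel2_swap_scale:
  "v \<in> V \<Longrightarrow> w \<in> W \<Longrightarrow> cong_mod (rel2 sV sW V W) 1 [(sV c v, w)] [(v, sW c w)]"
  by (rule cong_mod_join[OF cong_mod_rel2_scale_left cong_mod_rel2_scale_right])

end

context
  fixes sU :: "'k::field \<Rightarrow> 'u::ab_group_add \<Rightarrow> 'u" and sV :: "'k \<Rightarrow> 'v::ab_group_add \<Rightarrow> 'v"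
    and sW :: "'k \<Rightarrow> 'w::ab_group_add \<Rightarrow> 'w"
begin

lemma cong_mod_rel3_add1:
  "u \<in> U \<Longrightarrow> u' \<in> U \<Longrightarrow> v \<in> V \<Longrightarrow> w \<in> W \<Longrightarrow>
    cong_mod (rel3 sU sV sW U V W) 1 [(u + u', v, w)] [(u, v, w), (u', v, w)]"
  by (rule cong_mod_base[of "\<lambda>q. delta (u + u', v, w) q - delta (u, v, w) q - delta (u', v, w) q"])
     (unfold rel3_def, fast, simp add: fsum_def fun_eq_iff)

lemma cong_mod_rel3_add2:
  "u \<in> U \<Longrightarrow> v \<in> V \<Longrightarrow> v' \<in> V \<Longrightarrow> w \<in> W \<Longrightarrow>
    cong_mod (rel3 sU sV sW U V W) 1 [(u, v + v', w)] [(u, v, w), (u, v', w)]"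
  by (rule cong_mod_base[of "\<lambda>q. delta (u, v + v', w) q - delta (u, v, w) q - delta (u, v', w) q"])
     (unfold rel3_def, fast, simp add: fsum_def fun_eq_iff)

lemma cong_mod_rel3_add3:
  "u \<in> U \<Longrightarrow> v \<in> V \<Longrightarrow> w \<in> W \<Longrightarrow> w' \<in> W \<Longrightarrow>
    cong_mod (rel3 sU sV sW U V W) 1 [(u, v, w + w')] [(u, v, w), (u, v, w')]"
  by (rule cong_mod_base[of "\<lambda>q. delta (u, v, w + w') q - delta (u, v, w) q - delta (u, v, w') q"])
     (unfold rel3_def, fast, simp add: fsum_def fun_eq_iff)

lemma cong_mod_rel3_scale1:
  "u \<in> U \<Longrightarrow> v \<in> V \<Longrightarrow> w \<in> W \<Longrightarrow> cong_mod (rel3 sU sV sW U V W) c [(sU c u, v, w)] [(u, v, w)]"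
  by (rule cong_mod_base[of "\<lambda>q. delta (sU c u, v, w) q - c * delta (u, v, w) q"])
     (unfold rel3_def, fast, simp add: fsum_def fun_eq_iff)

lemma cong_mod_rel3_scale2:
  "u \<in> U \<Longrightarrow> v \<in> V \<Longrightarrow> w \<in> W \<Longrightarrow> cong_mod (rel3 sU sV sW U V W) c [(u, sV c v, w)] [(u, v, w)]"
  by (rule cong_mod_base[of "\<lambda>q. delta (u, sV c v, w) q - c * delta (u, v, w) q"])
     (unfold rel3_def, fast, simp add: fsum_def fun_eq_iff)

lemma cong_mod_rel3_scale3:
  "u \<in> U \<Longrightarrow> v \<in> V \<Longrightarrow> w \<in> W \<Longrightarrow> cong_mod (rel3 sU sV sW U V W) c [(u, v, sW c w)] [(u, v, w)]"
  by (rule cong_mod_base[of "\<lambda>q. delta (u, v, sW c w) q - c * delta (u, v, w) q"])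
     (unfold rel3_def, fast, simp add: fsum_def fun_eq_iff)

end

lemmas cong_mod_rel2 = cong_mod_rel2_add_left cong_mod_rel2_add_right
  cong_mod_rel2_scale_left cong_mod_rel2_scale_right

lemmas cong_mod_rel3 = cong_mod_rel3_add1 cong_mod_rel3_add2 cong_mod_rel3_add3
  cong_mod_rel3_scale1 cong_mod_rel3_scale2 cong_mod_rel3_scale3

lemma cong_mod_iff_diff_in_lin_span:
  "cong_mod R c xs ys \<longleftrightarrow> fsum xs - (\<lambda>q. c * fsum ys q) \<in> lin_span R"
  unfolding cong_mod_def by (simp add: fun_diff_def)

lemma cong_mod_concat_map_if_tensor2_eq:
  fixes sV :: "'k::field \<Rightarrow> 'v::ab_group_add \<Rightarrow> 'v" and sW :: "'k \<Rightarrow> 'w::ab_group_add \<Rightarrow> 'w"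
    and \<phi> :: "'v \<Rightarrow> 'w \<Rightarrow> 'q list" and R :: "('q \<Rightarrow> 'k) set"
  assumes add_left: "\<And>v v' w. v \<in> V \<Longrightarrow> v' \<in> V \<Longrightarrow> w \<in> W \<Longrightarrow>
      cong_mod R 1 (\<phi> (v + v') w) (\<phi> v w @ \<phi> v' w)"
    and add_right: "\<And>v w w'. v \<in> V \<Longrightarrow> w \<in> W \<Longrightarrow> w' \<in> W \<Longrightarrow>
      cong_mod R 1 (\<phi> v (w + w')) (\<phi> v w @ \<phi> v w')"
    and scale_left: "\<And>c v w. v \<in> V \<Longrightarrow> w \<in> W \<Longrightarrow> cong_mod R c (\<phi> (sV c v) w) (\<phi> v w)"
    and scale_right: "\<And>c v w. v \<in> V \<Longrightarrow> w \<in> W \<Longrightarrow> cong_mod R c (\<phi> v (sW c w)) (\<phi> v w)"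
    and xs_ys: "tensor2_eq sV sW V W xs ys"
  shows "cong_mod R 1 (concat (map (\<lambda>(v, w). \<phi> v w) xs)) (concat (map (\<lambda>(v, w). \<phi> v w) ys))"
proof -
  interpret F: vector_space "\<lambda>(c::'k) (f::'q \<Rightarrow> 'k). (\<lambda>q. c * f q)"
    by (rule vector_space_fun)
  have "(\<Sum>p\<leftarrow>xs. fsum (case_prod \<phi> p)) - (\<Sum>p\<leftarrow>ys. fsum (case_prod \<phi> p)) \<in> lin_span R"
    by (rule F.sum_list_diff_in_subspace_if_tensor2_eq[OF subspace_lin_span _ _ _ _ xs_ys])
       (use add_left add_right scale_left scale_right in
         \<open>auto simp: cong_mod_iff_diff_in_lin_span fsum_append fun_diff_def algebra_simps\<close>)
  then show ?thesis
    unfolding fsum_concat cong_mod_def by (simp add: fun_diff_def)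
qed

lemma cong_mod_concat_map_if_tensor3_eq:
  fixes sU :: "'k::field \<Rightarrow> 'u::ab_group_add \<Rightarrow> 'u"
    and sV :: "'k \<Rightarrow> 'v::ab_group_add \<Rightarrow> 'v" and sW :: "'k \<Rightarrow> 'w::ab_group_add \<Rightarrow> 'w"
    and \<phi> :: "'u \<Rightarrow> 'v \<Rightarrow> 'w \<Rightarrow> 'q list" and R :: "('q \<Rightarrow> 'k) set"
  assumes add1: "\<And>u u' v w. u \<in> U \<Longrightarrow> u' \<in> U \<Longrightarrow> v \<in> V \<Longrightarrow> w \<in> W \<Longrightarrow>
      cong_mod R 1 (\<phi> (u + u') v w) (\<phi> u v w @ \<phi> u' v w)"
    and add2: "\<And>u v v' w. u \<in> U \<Longrightarrow> v \<in> V \<Longrightarrow> v' \<in> V \<Longrightarrow> w \<in> W \<Longrightarrow>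
      cong_mod R 1 (\<phi> u (v + v') w) (\<phi> u v w @ \<phi> u v' w)"
    and add3: "\<And>u v w w'. u \<in> U \<Longrightarrow> v \<in> V \<Longrightarrow> w \<in> W \<Longrightarrow> w' \<in> W \<Longrightarrow>
      cong_mod R 1 (\<phi> u v (w + w')) (\<phi> u v w @ \<phi> u v w')"
    and scale1: "\<And>c u v w. u \<in> U \<Longrightarrow> v \<in> V \<Longrightarrow> w \<in> W \<Longrightarrow>
      cong_mod R c (\<phi> (sU c u) v w) (\<phi> u v w)"
    and scale2: "\<And>c u v w. u \<in> U \<Longrightarrow> v \<in> V \<Longrightarrow> w \<in> W \<Longrightarrow>
      cong_mod R c (\<phi> u (sV c v) w) (\<phi> u v w)"
    and scale3: "\<And>c u v w. u \<in> U \<Longrightarrow> v \<in> V \<Longrightarrow> w \<in> W \<Longrightarrow>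
      cong_mod R c (\<phi> u v (sW c w)) (\<phi> u v w)"
    and xs_ys: "tensor3_eq sU sV sW U V W xs ys"
  shows "cong_mod R 1
    (concat (map (\<lambda>(u, v, w). \<phi> u v w) xs)) (concat (map (\<lambda>(u, v, w). \<phi> u v w) ys))"
proof -
  interpret F: vector_space "\<lambda>(c::'k) (f::'q \<Rightarrow> 'k). (\<lambda>q. c * f q)"
    by (rule vector_space_fun)
  have "(\<Sum>p\<leftarrow>xs. fsum ((\<lambda>(u, v, w). \<phi> u v w) p)) - (\<Sum>p\<leftarrow>ys. fsum ((\<lambda>(u, v, w). \<phi> u v w) p))
      \<in> lin_span R"
    by (rule F.sum_list_diff_in_subspace_if_tensor3_eq[OF subspace_lin_span _ _ _ _ _ _ xs_ys])
       (use add1 add2 add3 scale1 scale2 scale3 in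
         \<open>auto simp: cong_mod_iff_diff_in_lin_span fsum_append fun_diff_def algebra_simps\<close>)
  then show ?thesis
    unfolding fsum_concat cong_mod_def by (simp add: fun_diff_def)
qed

lemma cong_mod_map_if_tensor2_eq:
  fixes sV :: "'k::field \<Rightarrow> 'v::ab_group_add \<Rightarrow> 'v" and sW :: "'k \<Rightarrow> 'w::ab_group_add \<Rightarrow> 'w"
  assumes "\<And>v v' w. v \<in> V \<Longrightarrow> v' \<in> V \<Longrightarrow> w \<in> W \<Longrightarrow>
      cong_mod R 1 [f (v + v', w)] [f (v, w), f (v', w)]"
    and "\<And>v w w'. v \<in> V \<Longrightarrow> w \<in> W \<Longrightarrow> w' \<in> W \<Longrightarrow>
      cong_mod R 1 [f (v, w + w')] [f (v, w), f (v, w')]"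
    and "\<And>c v w. v \<in> V \<Longrightarrow> w \<in> W \<Longrightarrow> cong_mod R c [f (sV c v, w)] [f (v, w)]"
    and "\<And>c v w. v \<in> V \<Longrightarrow> w \<in> W \<Longrightarrow> cong_mod R c [f (v, sW c w)] [f (v, w)]"
    and "tensor2_eq sV sW V W xs ys"
  shows "cong_mod R 1 (map f xs) (map f ys)"
proof -
  have "cong_mod R 1
      (concat (map (\<lambda>(v, w). [f (v, w)]) xs)) (concat (map (\<lambda>(v, w). [f (v, w)]) ys))"
    by (rule cong_mod_concat_map_if_tensor2_eq[OF _ _ _ _ assms(5)]) (simp_all add: assms(1-4))
  moreover have "(\<lambda>(v, w). [f (v, w)]) = (\<lambda>p. [f p])"
    by auto
  ultimately show ?thesis
    by simp
qed

lemma cong_mod_map_if_tensor3_eq: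
  fixes sU :: "'k::field \<Rightarrow> 'u::ab_group_add \<Rightarrow> 'u"
    and sV :: "'k \<Rightarrow> 'v::ab_group_add \<Rightarrow> 'v" and sW :: "'k \<Rightarrow> 'w::ab_group_add \<Rightarrow> 'w"
  assumes "\<And>u u' v w. u \<in> U \<Longrightarrow> u' \<in> U \<Longrightarrow> v \<in> V \<Longrightarrow> w \<in> W \<Longrightarrow>
      cong_mod R 1 [f (u + u', v, w)] [f (u, v, w), f (u', v, w)]"
    and "\<And>u v v' w. u \<in> U \<Longrightarrow> v \<in> V \<Longrightarrow> v' \<in> V \<Longrightarrow> w \<in> W \<Longrightarrow>
      cong_mod R 1 [f (u, v + v', w)] [f (u, v, w), f (u, v', w)]"
    and "\<And>u v w w'. u \<in> U \<Longrightarrow> v \<in> V \<Longrightarrow> w \<in> W \<Longrightarrow> w' \<in> W \<Longrightarrow>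
      cong_mod R 1 [f (u, v, w + w')] [f (u, v, w), f (u, v, w')]"
    and "\<And>c u v w. u \<in> U \<Longrightarrow> v \<in> V \<Longrightarrow> w \<in> W \<Longrightarrow> cong_mod R c [f (sU c u, v, w)] [f (u, v, w)]"
    and "\<And>c u v w. u \<in> U \<Longrightarrow> v \<in> V \<Longrightarrow> w \<in> W \<Longrightarrow> cong_mod R c [f (u, sV c v, w)] [f (u, v, w)]"
    and "\<And>c u v w. u \<in> U \<Longrightarrow> v \<in> V \<Longrightarrow> w \<in> W \<Longrightarrow> cong_mod R c [f (u, v, sW c w)] [f (u, v, w)]"
    and "tensor3_eq sU sV sW U V W xs ys"
  shows "cong_mod R 1 (map f xs) (map f ys)"
proof -
  have "cong_mod R 1 (concat (map (\<lambda>(u, v, w). [f (u, v, w)]) xs))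
      (concat (map (\<lambda>(u, v, w). [f (u, v, w)]) ys))"
    by (rule cong_mod_concat_map_if_tensor3_eq[OF _ _ _ _ _ _ assms(7)]) (simp_all add: assms(1-6))
  moreover have "(\<lambda>(u, v, w). [f (u, v, w)]) = (\<lambda>p. [f p])"
    by auto
  ultimately show ?thesis
    by simp
qed

lemma cong_mod_map_fst_if_tensor2_eq:
  fixes sV :: "'k::field \<Rightarrow> 'v::ab_group_add \<Rightarrow> 'v" and sW :: "'k \<Rightarrow> 'w::ab_group_add \<Rightarrow> 'w"
    and sV' :: "'k \<Rightarrow> 'v'::ab_group_add \<Rightarrow> 'v'"
  assumes "\<And>v v'. v \<in> V \<Longrightarrow> v' \<in> V \<Longrightarrow> f (v + v') = f v + f v'"
    and "\<And>c v. v \<in> V \<Longrightarrow> f (sV c v) = sV' c (f v)"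
    and "\<And>v. v \<in> V \<Longrightarrow> f v \<in> V'"
    and "tensor2_eq sV sW V W xs ys"
  shows "cong_mod (rel2 sV' sW V' W) 1 (map (\<lambda>(v, w). (f v, w)) xs) (map (\<lambda>(v, w). (f v, w)) ys)"
  using assms by (intro cong_mod_map_if_tensor2_eq) (auto intro: cong_mod_rel2)

lemma cong_mod_map_snd_if_tensor2_eq:
  fixes sV :: "'k::field \<Rightarrow> 'v::ab_group_add \<Rightarrow> 'v" and sW :: "'k \<Rightarrow> 'w::ab_group_add \<Rightarrow> 'w"
    and sW' :: "'k \<Rightarrow> 'w'::ab_group_add \<Rightarrow> 'w'"
  assumes "\<And>w w'. w \<in> W \<Longrightarrow> w' \<in> W \<Longrightarrow> f (w + w') = f w + f w'"
    and "\<And>c w. w \<in> W \<Longrightarrow> f (sW c w) = sW' c (f w)"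
    and "\<And>w. w \<in> W \<Longrightarrow> f w \<in> W'"
    and "tensor2_eq sV sW V W xs ys"
  shows "cong_mod (rel2 sV sW' V W') 1 (map (\<lambda>(v, w). (v, f w)) xs) (map (\<lambda>(v, w). (v, f w)) ys)"
  using assms by (intro cong_mod_map_if_tensor2_eq) (auto intro: cong_mod_rel2)

lemma cong_mod_map_third_if_tensor3_eq:
  fixes sU :: "'k::field \<Rightarrow> 'u::ab_group_add \<Rightarrow> 'u" and sV :: "'k \<Rightarrow> 'v::ab_group_add \<Rightarrow> 'v"
    and sW :: "'k \<Rightarrow> 'w::ab_group_add \<Rightarrow> 'w" and sW' :: "'k \<Rightarrow> 'w'::ab_group_add \<Rightarrow> 'w'"
  assumes "\<And>w w'. w \<in> W \<Longrightarrow> w' \<in> W \<Longrightarrow> f (w + w') = f w + f w'"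
    and "\<And>c w. w \<in> W \<Longrightarrow> f (sW c w) = sW' c (f w)"
    and "\<And>w. w \<in> W \<Longrightarrow> f w \<in> W'"
    and "tensor3_eq sU sV sW U V W xs ys"
  shows "cong_mod (rel3 sU sV sW' U V W') 1
    (map (\<lambda>(u, v, w). (u, v, f w)) xs) (map (\<lambda>(u, v, w). (u, v, f w)) ys)"
  using assms by (intro cong_mod_map_if_tensor3_eq) (auto intro: cong_mod_rel3)

lemma cong_mod_map_scale_fst:
  "cong_mod (rel2 sV sW UNIV UNIV) c (map (\<lambda>(v, w). (sV c v, w)) xs) xs"
  by (rule cong_mod_map[where g = id, simplified]) (auto intro: cong_mod_rel2_scale_left)

lemma cong_mod_rel2_sum_list_left:
  "cong_mod (rel2 sV sW UNIV UNIV) 1 [(\<Sum>x\<leftarrow>l. f x, w)] (map (\<lambda>x. (f x, w)) l)"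
proof (induction l)
  case Nil
  then show ?case
    by (simp add: cong_mod_rel2_zero_left)
next
  case (Cons x l)
  have "cong_mod (rel2 sV sW UNIV UNIV) 1
      [(f x + (\<Sum>x\<leftarrow>l. f x), w)] ([(f x, w)] @ [(\<Sum>x\<leftarrow>l. f x, w)])"
    by (simp add: cong_mod_rel2_add_left)
  also have "cong_mod (rel2 sV sW UNIV UNIV) 1 \<dots> ([(f x, w)] @ map (\<lambda>x. (f x, w)) l)"
    by (rule cong_mod_append[OF cong_mod_refl Cons])
  finally show ?case
    by simp
qed

section \<open>Twisting data\<close>

definition tensor_mult :: "('h::times \<times> 'a::times) list \<Rightarrow> ('h \<times> 'a) list \<Rightarrow> ('h \<times> 'a) list" where
  "tensor_mult xs ys = concat (map (\<lambda>(h, a). map (\<lambda>(g, b). (h * g, a * b)) ys) xs)"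

lemma tensor_mult_eq: "[(h * g, a * b). (h, a) \<leftarrow> xs, (g, b) \<leftarrow> ys] = tensor_mult xs ys"
  unfolding tensor_mult_def by simp

definition tensor_left :: "'h \<Rightarrow> ('h \<times> 'a) list \<Rightarrow> ('h \<times> 'h \<times> 'a) list" where
  "tensor_left h l = map (\<lambda>(g, b). (h, g, b)) l"

definition tensor_right :: "('h \<times> 'h) list \<Rightarrow> 'a \<Rightarrow> ('h \<times> 'h \<times> 'a) list" where
  "tensor_right l a = map (\<lambda>(h1, h2). (h1, h2, a)) l"

lemma concat_map_tensor_left:
  "[(h, g, b). (h, a) \<leftarrow> xs, (g, b) \<leftarrow> f a] = concat (map (\<lambda>(h, a). tensor_left h (f a)) xs)"
  unfolding tensor_left_def by simp

lemma concat_map_tensor_right: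
  "[(h1, h2, a). (h, a) \<leftarrow> xs, (h1, h2) \<leftarrow> D h]
    = concat (map (\<lambda>(h, a). tensor_right (D h) a) xs)"
  unfolding tensor_right_def by simp

lemma sum_list_concat:
  "sum_list (concat xss) = sum_list (map sum_list (xss :: 'a::monoid_add list list))"
  by (induction xss) auto

lemma mult_map_eq_if_tensor2_eq:
  assumes "k_algebra s" "tensor2_eq s s V W xs ys"
  shows "mult_map xs = mult_map ys"
proof -
  interpret vector_space s
    using assms(1) unfolding k_algebra_def by blast
  have scale_mult: "s c (x * y) = s c x * y" "s c (x * y) = x * s c y" for c x y
    using assms(1) unfolding k_algebra_def by blast+
  have "(\<Sum>p\<leftarrow>xs. (\<lambda>(m, n). m * n) p) = (\<Sum>p\<leftarrow>ys. (\<lambda>(m, n). m * n) p)"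
    using assms(2)
    by (rule sum_list_eq_if_tensor2_eq[rotated 4])
       (auto simp: distrib_left distrib_right scale_mult[symmetric])
  then show ?thesis
    unfolding mult_map_def by simp
qed

locale twisting_datum =
  fixes sH :: "'k::field \<Rightarrow> 'h::ring_1 \<Rightarrow> 'h"
    and sA :: "'k \<Rightarrow> 'a::ring_1 \<Rightarrow> 'a"
    and \<Delta> :: "'h \<Rightarrow> ('h \<times> 'h) list"
    and \<epsilon> :: "'h \<Rightarrow> 'k"
    and \<pi> :: "'h \<Rightarrow> 'a \<Rightarrow> 'a"
    and \<psi> :: "'a \<Rightarrow> ('h \<times> 'a) list"
  assumes left_twisting_datum: "left_twisting_datum sH \<Delta> \<epsilon> sA \<pi> \<psi>"
begin

abbreviation "RHA \<equiv> rel2 sH sA UNIV UNIV"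
abbreviation "RHH \<equiv> rel2 sH sH UNIV UNIV"
abbreviation "RHHA \<equiv> rel3 sH sH sA UNIV UNIV UNIV"
abbreviation "AH \<equiv> invariants sA \<epsilon> \<pi>"
abbreviation "Aco \<equiv> coinvariants sH sA \<psi>"

lemma bialgebra: "bialgebra sH \<Delta> \<epsilon>"
  using left_twisting_datum unfolding left_twisting_datum_def by blast

lemma module_algebra: "module_algebra sH \<Delta> \<epsilon> sA UNIV \<pi>"
  using left_twisting_datum unfolding left_twisting_datum_def by blast

lemma comodule_algebra: "comodule_algebra sH \<Delta> \<epsilon> sA UNIV \<psi>"
  using left_twisting_datum unfolding left_twisting_datum_def by blast

lemma k_algebra_A: "k_algebra sA"
  using left_twisting_datum unfolding left_twisting_datum_def by blast

lemma k_algebra_H: "k_algebra sH"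
  using bialgebra unfolding bialgebra_def by blast

sublocale H: vector_space sH
  using k_algebra_H unfolding k_algebra_def by blast

sublocale A: vector_space sA
  using k_algebra_A unfolding k_algebra_def by blast

lemma sH_mult: "sH c (x * y) = sH c x * y" "sH c (x * y) = x * sH c y"
  using k_algebra_H unfolding k_algebra_def by blast+

lemma sA_mult: "sA c (x * y) = sA c x * y" "sA c (x * y) = x * sA c y"
  using k_algebra_A unfolding k_algebra_def by blast+

lemma Delta_add: "cong_mod RHH 1 (\<Delta> (x + y)) (\<Delta> x @ \<Delta> y)"
  and Delta_scale: "cong_mod RHH 1 (\<Delta> (sH c x)) (map (\<lambda>(a, b). (sH c a, b)) (\<Delta> x))"
  and eps_add: "\<epsilon> (x + y) = \<epsilon> x + \<epsilon> y"
  and eps_scale: "\<epsilon> (sH c x) = c * \<epsilon> x"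
  and counit_left: "(\<Sum>(a, b)\<leftarrow>\<Delta> h. sH (\<epsilon> a) b) = h"
  and counit_right: "(\<Sum>(a, b)\<leftarrow>\<Delta> h. sH (\<epsilon> b) a) = h"
  using bialgebra unfolding bialgebra_def tensor2_eq_UNIV by blast+

lemma pi_add_left: "\<pi> (h + g) m = \<pi> h m + \<pi> g m"
  and pi_scale_left: "\<pi> (sH c h) m = sA c (\<pi> h m)"
  and pi_add: "\<pi> h (m + n) = \<pi> h m + \<pi> h n"
  and pi_scale: "\<pi> h (sA c m) = sA c (\<pi> h m)"
  and pi_one: "\<pi> 1 m = m"
  and pi_pi: "\<pi> (h * g) m = \<pi> h (\<pi> g m)"
  and pi_mult: "\<pi> h (m * n) = (\<Sum>(h1, h2)\<leftarrow>\<Delta> h. \<pi> h1 m * \<pi> h2 n)"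
  and pi_unit: "\<pi> h 1 = sA (\<epsilon> h) 1"
  using module_algebra unfolding module_algebra_def by simp_all

lemma psi_add: "cong_mod RHA 1 (\<psi> (m + n)) (\<psi> m @ \<psi> n)"
  and psi_scale: "cong_mod RHA 1 (\<psi> (sA c n)) (map (\<lambda>(h, a). (sH c h, a)) (\<psi> n))"
  and psi_coassoc: "cong_mod RHHA 1
    [(h, g, b). (h, a) \<leftarrow> \<psi> n, (g, b) \<leftarrow> \<psi> a] [(h1, h2, a). (h, a) \<leftarrow> \<psi> n, (h1, h2) \<leftarrow> \<Delta> h]"
  and psi_counit: "(\<Sum>(h, a)\<leftarrow>\<psi> n. sA (\<epsilon> h) a) = n"
  and psi_mult: "cong_mod RHA 1 (\<psi> (m * n)) (tensor_mult (\<psi> m) (\<psi> n))"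
  and psi_one: "cong_mod RHA 1 (\<psi> 1) [(1, 1)]"
  using comodule_algebra
  unfolding comodule_algebra_def tensor2_eq_UNIV tensor3_eq_UNIV tensor_mult_eq by simp_all

lemma psi_pi: "cong_mod RHA 1 (\<psi> (\<pi> h a)) (map (\<lambda>(g, b). (g, \<pi> h b)) (\<psi> a))"
  using left_twisting_datum unfolding left_twisting_datum_def tensor2_eq_UNIV by simp

lemma mem_AH_iff: "a \<in> AH \<longleftrightarrow> (\<forall>h. \<pi> h a = sA (\<epsilon> h) a)"
  unfolding invariants_def by simp

lemma mem_Aco_iff: "a \<in> Aco \<longleftrightarrow> cong_mod RHA 1 (\<psi> a) [(1, a)]"
  unfolding coinvariants_def tensor2_eq_UNIV by simp

lemma eps_zero: "\<epsilon> 0 = 0"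
  using eps_add[of 0 0] by (metis add_0 add_cancel_left_right)

lemma eps_sum_list: "\<epsilon> (\<Sum>x\<leftarrow>l. f x) = (\<Sum>x\<leftarrow>l. \<epsilon> (f x))"
  by (induction l) (auto simp: eps_zero eps_add)

lemma eps_Delta: "(\<Sum>(a, b)\<leftarrow>\<Delta> h. \<epsilon> a * \<epsilon> b) = \<epsilon> h"
  using arg_cong[OF counit_left[of h], of \<epsilon>]
  by (simp add: eps_sum_list case_prod_unfold eps_scale)

lemma pi_zero: "\<pi> h 0 = 0"
  using pi_add[of h 0 0] by simp

lemma pi_zero_left: "\<pi> 0 m = 0"
  using pi_add_left[of 0 0 m] by simp

lemma pi_sum_list_left: "\<pi> (\<Sum>x\<leftarrow>l. f x) m = (\<Sum>x\<leftarrow>l. \<pi> (f x) m)"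
  by (induction l) (auto simp: pi_zero_left pi_add_left)

lemma pi_sum_list: "\<pi> h (\<Sum>x\<leftarrow>l. f x) = (\<Sum>x\<leftarrow>l. \<pi> h (f x))"
  by (induction l) (auto simp: pi_zero pi_add)

lemma sA_sum_list_left: "sA (\<Sum>x\<leftarrow>l. f x) m = (\<Sum>x\<leftarrow>l. sA (f x) m)"
  by (induction l) (auto simp: A.scale_left_distrib)

lemma sA_sum_list_right: "sA c (\<Sum>x\<leftarrow>l. f x) = (\<Sum>x\<leftarrow>l. sA c (f x))"
  by (induction l) (auto simp: A.scale_right_distrib)

lemma psi_zero: "cong_mod RHA 1 (\<psi> 0) []"
  using lin_span_cmult[OF psi_add[of 0 0, unfolded cong_mod_def], of "-1"]
  unfolding cong_mod_def by (simp add: fsum_append)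

lemma psi_scale_cong: "cong_mod RHA c (\<psi> (sA c n)) (\<psi> n)"
  using cong_mod_trans[OF psi_scale cong_mod_map_scale_fst] by simp

lemma tensor_mult_cong_left:
  assumes "cong_mod RHA 1 xs xs'"
  shows "cong_mod RHA 1 (tensor_mult xs ys) (tensor_mult xs' ys)"
  unfolding tensor_mult_def
proof (rule cong_mod_concat_map_if_tensor2_eq)
  show "tensor2_eq sH sA UNIV UNIV xs xs'"
    using assms by (simp add: tensor2_eq_UNIV)
qed (auto intro!: cong_mod_map_append cong_mod_map
      simp: distrib_right sH_mult(1)[symmetric] sA_mult(1)[symmetric] intro: cong_mod_rel2)

lemma tensor_mult_cong_right:
  assumes "cong_mod RHA 1 ys ys'"
  shows "cong_mod RHA 1 (tensor_mult xs ys) (tensor_mult xs ys')"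
  unfolding tensor_mult_def
proof (rule cong_mod_concat_map, clarify)
  fix h a
  show "cong_mod RHA 1 (map (\<lambda>(g, b). (h * g, a * b)) ys) (map (\<lambda>(g, b). (h * g, a * b)) ys')"
    using assms[folded tensor2_eq_UNIV]
    by (rule cong_mod_map_if_tensor2_eq[rotated 4])
       (auto simp: distrib_left sH_mult(2)[symmetric] sA_mult(2)[symmetric] intro: cong_mod_rel2)
qed

lemma tensor_mult_cong:
  "cong_mod RHA 1 xs xs' \<Longrightarrow> cong_mod RHA 1 ys ys' \<Longrightarrow>
    cong_mod RHA 1 (tensor_mult xs ys) (tensor_mult xs' ys')"
  using tensor_mult_cong_left tensor_mult_cong_right cong_mod_trans_one by blast

subsection \<open>Invariants and coinvariants\<close>

lemma AH_mult:
  assumes x: "x \<in> AH" and y: "y \<in> AH"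
  shows "x * y \<in> AH"
proof -
  have "\<pi> h (x * y) = sA (\<epsilon> h) (x * y)" for h
  proof -
    have "\<pi> h (x * y) = (\<Sum>(h1, h2)\<leftarrow>\<Delta> h. sA (\<epsilon> h1) x * sA (\<epsilon> h2) y)"
      using x y by (simp add: pi_mult mem_AH_iff)
    also have "\<dots> = sA (\<Sum>(h1, h2)\<leftarrow>\<Delta> h. \<epsilon> h1 * \<epsilon> h2) (x * y)"
      by (simp add: sA_sum_list_left case_prod_unfold sA_mult[symmetric] mult.commute)
    also have "\<dots> = sA (\<epsilon> h) (x * y)"
      by (simp add: eps_Delta)
    finally show ?thesis .
  qed
  then show ?thesis
    by (simp add: mem_AH_iff)
qed

lemma subalgebra_AH: "subalgebra sA AH"
proof -
  have "0 \<in> AH" "1 \<in> AH" "\<And>x y. x \<in> AH \<Longrightarrow> y \<in> AH \<Longrightarrow> x + y \<in> AH"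
    "\<And>c x. x \<in> AH \<Longrightarrow> sA c x \<in> AH"
    by (simp_all add: mem_AH_iff pi_zero pi_unit pi_add pi_scale A.scale_right_distrib mult.commute)
  then show ?thesis
    unfolding subalgebra_def using AH_mult by blast
qed

lemma Aco_add:
  assumes "x \<in> Aco" "y \<in> Aco"
  shows "x + y \<in> Aco"
proof -
  have "cong_mod RHA 1 (\<psi> (x + y)) (\<psi> x @ \<psi> y)"
    by (rule psi_add)
  also have "cong_mod RHA 1 (\<psi> x @ \<psi> y) ([(1, x)] @ [(1, y)])"
    using assms unfolding mem_Aco_iff by (rule cong_mod_append)
  also have "cong_mod RHA 1 ([(1, x)] @ [(1, y)]) [(1, x + y)]"
    by (simp add: cong_mod_sym cong_mod_rel2_add_right)
  finally show ?thesis
    unfolding mem_Aco_iff .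
qed

lemma Aco_mult:
  assumes "x \<in> Aco" "y \<in> Aco"
  shows "x * y \<in> Aco"
proof -
  have "cong_mod RHA 1 (\<psi> (x * y)) (tensor_mult (\<psi> x) (\<psi> y))"
    by (rule psi_mult)
  also have "cong_mod RHA 1 (tensor_mult (\<psi> x) (\<psi> y)) (tensor_mult [(1, x)] [(1, y)])"
    using assms unfolding mem_Aco_iff by (rule tensor_mult_cong)
  finally show ?thesis
    unfolding mem_Aco_iff by (simp add: tensor_mult_def)
qed

lemma Aco_scale:
  assumes "x \<in> Aco"
  shows "sA c x \<in> Aco"
proof -
  have "cong_mod RHA c (\<psi> (sA c x)) [(1, x)]"
    using cong_mod_trans[OF psi_scale_cong assms[unfolded mem_Aco_iff]] by simp
  moreover have "cong_mod RHA c [(1, sA c x)] [(1, x)]"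
    by (simp add: cong_mod_rel2_scale_right)
  ultimately show ?thesis
    unfolding mem_Aco_iff by (rule cong_mod_join)
qed

lemma subalgebra_Aco: "subalgebra sA Aco"
proof -
  have "0 \<in> Aco"
    using cong_mod_trans_one[OF psi_zero cong_mod_sym[OF cong_mod_rel2_zero_right]]
    unfolding mem_Aco_iff by simp
  then show ?thesis
    unfolding subalgebra_def using psi_one Aco_add Aco_mult Aco_scale by (simp add: mem_Aco_iff)
qed

lemma pi_Aco:
  assumes "a \<in> Aco"
  shows "\<pi> h a \<in> Aco"
proof -
  have "cong_mod RHA 1 (\<psi> (\<pi> h a)) (map (\<lambda>(g, b). (g, \<pi> h b)) (\<psi> a))"
    by (rule psi_pi)
  also have "cong_mod RHA 1 (map (\<lambda>(g, b). (g, \<pi> h b)) (\<psi> a)) (map (\<lambda>(g, b). (g, \<pi> h b)) [(1, a)])"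
    using assms[unfolded mem_Aco_iff, folded tensor2_eq_UNIV]
    by (intro cong_mod_map_snd_if_tensor2_eq) (auto simp: pi_add pi_scale)
  finally show ?thesis
    unfolding mem_Aco_iff by simp
qed

lemma module_algebra_Aco: "module_algebra sH \<Delta> \<epsilon> sA Aco \<pi>"
  unfolding module_algebra_def
  using pi_Aco by (simp add: pi_add_left pi_scale_left pi_add pi_scale pi_one pi_pi pi_mult pi_unit)

subsection \<open>The coaction on invariants\<close>

definition coord :: "'h \<Rightarrow> 'h \<Rightarrow> 'k" where
  "coord e g = H.representation (H.extend_basis {}) g e"

lemma independent_basis_H: "H.independent (H.extend_basis {})"
  and span_basis_H: "H.span (H.extend_basis {}) = UNIV"
  using H.independent_extend_basis[OF H.independent_empty]
    H.span_extend_basis[OF H.independent_empty]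
  by simp_all

lemma coord_add: "coord e (g + g') = coord e g + coord e g'"
  and coord_scale: "coord e (sH c g) = c * coord e g"
  and finite_coord_nonzero: "finite {e. coord e g \<noteq> 0}"
  using independent_basis_H span_basis_H unfolding coord_def
  by (simp_all add: H.representation_add H.representation_scale H.finite_representation)

lemma sum_coord_scale:
  assumes "finite S" "{e. coord e g \<noteq> 0} \<subseteq> S"
  shows "(\<Sum>e\<in>S. sH (coord e g) e) = g"
proof -
  have "(\<Sum>e\<in>S. sH (coord e g) e) = (\<Sum>e\<in>{e. coord e g \<noteq> 0}. sH (coord e g) e)"
    using assms by (intro sum.mono_neutral_right) auto
  also have "\<dots> = g"
    using independent_basis_H span_basis_H unfolding coord_def
    by (intro H.sum_nonzero_representation_eq) auto
  finally show ?thesis .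
qed

lemma cong_mod_expand_coord:
  assumes "distinct es" "{e. coord e g \<noteq> 0} \<subseteq> set es"
  shows "cong_mod RHA 1 [(g, c)] (map (\<lambda>e. (e, sA (coord e g) c)) es)"
proof -
  have "g = (\<Sum>e\<leftarrow>es. sH (coord e g) e)"
    using sum_coord_scale[of "set es" g] assms by (simp add: sum_list_distinct_conv_sum_set)
  then have "cong_mod RHA 1 [(g, c)] (map (\<lambda>e. (sH (coord e g) e, c)) es)"
    using cong_mod_rel2_sum_list_left[where f = "\<lambda>e. sH (coord e g) e" and l = es] by simp
  also have "cong_mod RHA 1 \<dots> (map (\<lambda>e. (e, sA (coord e g) c)) es)"
    by (rule cong_mod_map) (simp add: cong_mod_rel2_swap_scale)
  finally show ?thesis .
qed

lemma cong_mod_expand_coords: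
  assumes "distinct es" "\<And>g c. (g, c) \<in> set xs \<Longrightarrow> {e. coord e g \<noteq> 0} \<subseteq> set es"
  shows "cong_mod RHA 1 xs (map (\<lambda>e. (e, \<Sum>(g, c)\<leftarrow>xs. sA (coord e g) c)) es)"
  using assms(2)
proof (induction xs)
  case Nil
  have "cong_mod RHA 1 (map (\<lambda>e. (e, 0)) es) (concat (map (\<lambda>e. []) es))"
    using cong_mod_concat_map[of es RHA 1 "\<lambda>e. [(e, 0)]" "\<lambda>e. []"]
    by (simp add: cong_mod_rel2_zero_right)
  moreover have "concat (map (\<lambda>e. []) es) = ([] :: ('h \<times> 'a) list)"
    by (induction es) auto
  ultimately show ?case
    by (simp add: cong_mod_sym)
next
  case (Cons p xs)
  obtain g c where p: "p = (g, c)"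
    by force
  have "cong_mod RHA 1 ([(g, c)] @ xs)
      (map (\<lambda>e. (e, sA (coord e g) c)) es @ map (\<lambda>e. (e, \<Sum>(g, c)\<leftarrow>xs. sA (coord e g) c)) es)"
    by (rule cong_mod_append[OF cong_mod_expand_coord[OF assms(1)] Cons.IH])
       (use Cons.prems p in auto)
  also have "cong_mod RHA 1 \<dots>
      (map (\<lambda>e. (e, sA (coord e g) c + (\<Sum>(g, c)\<leftarrow>xs. sA (coord e g) c))) es)"
    by (rule cong_mod_sym, rule cong_mod_map_append) (simp add: cong_mod_rel2_add_right)
  finally show ?case
    by (simp add: p)
qed

text \<open>A normal form of psi a: its H-components are the basis vectors e occurring in psi a, with
  A-component psi_coeff e a.  These components depend only on the tensor psi a, not on the
  representative, which is why they inherit invariance from a.\<close>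

definition psi_basis :: "'a \<Rightarrow> 'h list" where
  "psi_basis a = (SOME es. distinct es \<and> set es = (\<Union>g\<in>fst ` set (\<psi> a). {e. coord e g \<noteq> 0}))"

definition psi_coeff :: "'h \<Rightarrow> 'a \<Rightarrow> 'a" where
  "psi_coeff e a = (\<Sum>(g, c)\<leftarrow>\<psi> a. sA (coord e g) c)"

definition psi_coords :: "'a \<Rightarrow> ('h \<times> 'a) list" where
  "psi_coords a = map (\<lambda>e. (e, psi_coeff e a)) (psi_basis a)"

lemma psi_basis:
  "distinct (psi_basis a) \<and> set (psi_basis a) = (\<Union>g\<in>fst ` set (\<psi> a). {e. coord e g \<noteq> 0})"
proof -
  have "finite (\<Union>g\<in>fst ` set (\<psi> a). {e. coord e g \<noteq> 0})"
    by (simp add: finite_coord_nonzero)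
  then obtain es where "distinct es \<and> set es = (\<Union>g\<in>fst ` set (\<psi> a). {e. coord e g \<noteq> 0})"
    using finite_distinct_list by metis
  then show ?thesis
    unfolding psi_basis_def by (rule someI)
qed

lemma psi_cong_psi_coords: "cong_mod RHA 1 (\<psi> a) (psi_coords a)"
  unfolding psi_coords_def psi_coeff_def
  using psi_basis by (intro cong_mod_expand_coords) force+

lemma psi_coeff_AH:
  assumes a: "a \<in> AH"
  shows "psi_coeff e a \<in> AH"
proof -
  have "\<pi> h (psi_coeff e a) = sA (\<epsilon> h) (psi_coeff e a)" for h
  proof -
    have "cong_mod RHA 1 (map (\<lambda>(g, b). (g, \<pi> h b)) (\<psi> a)) (\<psi> (\<pi> h a))"
      by (rule cong_mod_sym[OF psi_pi])
    also have "\<pi> h a = sA (\<epsilon> h) a"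
      using a by (simp add: mem_AH_iff)
    also have "cong_mod RHA 1 (\<psi> (sA (\<epsilon> h) a)) (map (\<lambda>(g, b). (sH (\<epsilon> h) g, b)) (\<psi> a))"
      by (rule psi_scale)
    finally have "(\<Sum>p\<leftarrow>map (\<lambda>(g, b). (g, \<pi> h b)) (\<psi> a). (\<lambda>(g, b). sA (coord e g) b) p)
        = (\<Sum>p\<leftarrow>map (\<lambda>(g, b). (sH (\<epsilon> h) g, b)) (\<psi> a). (\<lambda>(g, b). sA (coord e g) b) p)"
      unfolding tensor2_eq_UNIV[symmetric]
      by (rule A.sum_list_eq_if_tensor2_eq[rotated 4])
         (auto simp: coord_add coord_scale A.scale_left_distrib A.scale_right_distrib)
    then show ?thesis
      unfolding psi_coeff_def
      by (simp add: case_prod_unfold coord_scale o_def pi_sum_list sA_sum_list_right pi_scale)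
  qed
  then show ?thesis
    by (simp add: mem_AH_iff)
qed

lemma ex_coaction_AH:
  "\<exists>\<psi>'. \<forall>a\<in>AH. set (\<psi>' a) \<subseteq> UNIV \<times> AH \<and> tensor2_eq sH sA UNIV UNIV (\<psi>' a) (\<psi> a)"
  using psi_coeff_AH cong_mod_sym[OF psi_cong_psi_coords]
  by (intro exI[of _ psi_coords]) (auto simp: psi_coords_def tensor2_eq_UNIV)

text \<open>AH is a direct summand of A, so H \<otimes> AH embeds into H \<otimes> A: apply a linear projection
  onto AH to the last tensor factor.\<close>

lemma ex_projection_AH:
  "\<exists>p. Vector_Spaces.linear sA sA p \<and> range p \<subseteq> AH \<and> (\<forall>x\<in>AH. p x = x)"
proof -
  interpret vector_space_pair sA sA ..
  have "A.subspace AH"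
    using subalgebra_AH unfolding subalgebra_def by (intro A.subspaceI) auto
  from linear_exists_left_inverse_on[OF A.linear_id this] show ?thesis
    by auto
qed

definition proj_AH :: "'a \<Rightarrow> 'a" where
  "proj_AH = (SOME p. Vector_Spaces.linear sA sA p \<and> range p \<subseteq> AH \<and> (\<forall>x\<in>AH. p x = x))"

lemma proj_AH: "proj_AH x \<in> AH" "proj_AH (x + y) = proj_AH x + proj_AH y"
  "proj_AH (sA c x) = sA c (proj_AH x)" "x \<in> AH \<Longrightarrow> proj_AH x = x"
proof -
  interpret vector_space_pair sA sA ..
  have "Vector_Spaces.linear sA sA proj_AH \<and> range proj_AH \<subseteq> AH \<and> (\<forall>x\<in>AH. proj_AH x = x)"
    unfolding proj_AH_def by (rule someI_ex[OF ex_projection_AH])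
  then show "proj_AH x \<in> AH" "proj_AH (x + y) = proj_AH x + proj_AH y"
    "proj_AH (sA c x) = sA c (proj_AH x)" "x \<in> AH \<Longrightarrow> proj_AH x = x"
    using linear_add linear_scale by auto
qed

lemma tensor2_eq_AH_if_cong_mod:
  assumes "set xs \<subseteq> UNIV \<times> AH" "set ys \<subseteq> UNIV \<times> AH" "cong_mod RHA 1 xs ys"
  shows "tensor2_eq sH sA UNIV AH xs ys"
proof -
  have "cong_mod (rel2 sH sA UNIV AH) 1
      (map (\<lambda>(g, b). (g, proj_AH b)) xs) (map (\<lambda>(g, b). (g, proj_AH b)) ys)"
    using assms(3)[folded tensor2_eq_UNIV]
    by (rule cong_mod_map_snd_if_tensor2_eq[rotated 3]) (auto simp: proj_AH)
  moreover have "map (\<lambda>(g, b). (g, proj_AH b)) xs = xs" "map (\<lambda>(g, b). (g, proj_AH b)) ys = ys"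
    using assms(1,2) by (auto intro!: map_idI simp: proj_AH)
  ultimately show ?thesis
    using assms unfolding tensor2_eq_iff_cong_mod by simp
qed

lemma tensor3_eq_AH_if_cong_mod:
  assumes "set xs \<subseteq> UNIV \<times> UNIV \<times> AH" "set ys \<subseteq> UNIV \<times> UNIV \<times> AH" "cong_mod RHHA 1 xs ys"
  shows "tensor3_eq sH sH sA UNIV UNIV AH xs ys"
proof -
  have "cong_mod (rel3 sH sH sA UNIV UNIV AH) 1
      (map (\<lambda>(h, g, b). (h, g, proj_AH b)) xs) (map (\<lambda>(h, g, b). (h, g, proj_AH b)) ys)"
    using assms(3)[folded tensor3_eq_UNIV]
    by (rule cong_mod_map_third_if_tensor3_eq[rotated 3]) (auto simp: proj_AH)
  moreover have "map (\<lambda>(h, g, b). (h, g, proj_AH b)) xs = xs"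
    "map (\<lambda>(h, g, b). (h, g, proj_AH b)) ys = ys"
    using assms(1,2) by (auto intro!: map_idI simp: proj_AH)
  ultimately show ?thesis
    using assms unfolding tensor3_eq_iff_cong_mod by simp
qed

lemma tensor_left_cong:
  "cong_mod RHA 1 l l' \<Longrightarrow> cong_mod RHHA 1 (tensor_left h l) (tensor_left h l')"
  unfolding tensor_left_def tensor2_eq_UNIV[symmetric]
  by (erule cong_mod_map_if_tensor2_eq[rotated 4]) (auto intro: cong_mod_rel3)

lemma tensor_right_cong:
  "cong_mod RHH 1 l l' \<Longrightarrow> cong_mod RHHA 1 (tensor_right l a) (tensor_right l' a)"
  unfolding tensor_right_def tensor2_eq_UNIV[symmetric]
  by (erule cong_mod_map_if_tensor2_eq[rotated 4]) (auto intro: cong_mod_rel3)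

lemma id_tensor_psi_cong:
  assumes "cong_mod RHA 1 xs ys"
  shows "cong_mod RHHA 1 (concat (map (\<lambda>(h, a). tensor_left h (\<psi> a)) xs))
    (concat (map (\<lambda>(h, a). tensor_left h (\<psi> a)) ys))"
proof (rule cong_mod_concat_map_if_tensor2_eq)
  show "tensor2_eq sH sA UNIV UNIV xs ys"
    using assms by (simp add: tensor2_eq_UNIV)
  show "cong_mod RHHA 1 (tensor_left v (\<psi> (w + w'))) (tensor_left v (\<psi> w) @ tensor_left v (\<psi> w'))"
    for v w w'
    using tensor_left_cong[OF psi_add[of w w'], of v] by (simp add: tensor_left_def)
  show "cong_mod RHHA c (tensor_left v (\<psi> (sA c w))) (tensor_left v (\<psi> w))" for c v w
  proof -
    have "cong_mod RHHA 1 (tensor_left v (\<psi> (sA c w)))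
        (tensor_left v (map (\<lambda>(h, a). (sH c h, a)) (\<psi> w)))"
      by (rule tensor_left_cong[OF psi_scale])
    moreover have "cong_mod RHHA c
        (tensor_left v (map (\<lambda>(h, a). (sH c h, a)) (\<psi> w))) (tensor_left v (\<psi> w))"
      unfolding tensor_left_def by (simp, rule cong_mod_map) (auto intro: cong_mod_rel3)
    ultimately show ?thesis
      using cong_mod_trans by fastforce
  qed
qed (auto simp: tensor_left_def intro!: cong_mod_map_append cong_mod_map intro: cong_mod_rel3)

lemma Delta_tensor_id_cong:
  assumes "cong_mod RHA 1 xs ys"
  shows "cong_mod RHHA 1 (concat (map (\<lambda>(h, a). tensor_right (\<Delta> h) a) xs))
    (concat (map (\<lambda>(h, a). tensor_right (\<Delta> h) a) ys))"
proof (rule cong_mod_concat_map_if_tensor2_eq)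
  show "tensor2_eq sH sA UNIV UNIV xs ys"
    using assms by (simp add: tensor2_eq_UNIV)
  show "cong_mod RHHA 1
      (tensor_right (\<Delta> (v + v')) w) (tensor_right (\<Delta> v) w @ tensor_right (\<Delta> v') w)"
    for v v' w
    using tensor_right_cong[OF Delta_add[of v v'], of w] by (simp add: tensor_right_def)
  show "cong_mod RHHA c (tensor_right (\<Delta> (sH c v)) w) (tensor_right (\<Delta> v) w)" for c v w
  proof -
    have "cong_mod RHHA 1 (tensor_right (\<Delta> (sH c v)) w)
        (tensor_right (map (\<lambda>(a, b). (sH c a, b)) (\<Delta> v)) w)"
      by (rule tensor_right_cong[OF Delta_scale])
    moreover have "cong_mod RHHA c
        (tensor_right (map (\<lambda>(a, b). (sH c a, b)) (\<Delta> v)) w) (tensor_right (\<Delta> v) w)"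
      unfolding tensor_right_def by (simp, rule cong_mod_map) (auto intro: cong_mod_rel3)
    ultimately show ?thesis
      using cong_mod_trans by fastforce
  qed
qed (auto simp: tensor_right_def intro!: cong_mod_map_append cong_mod_map intro: cong_mod_rel3)

subsection \<open>The twisted product\<close>

abbreviation "twprod \<equiv> twisted_prod \<pi> \<psi>"

lemma twisted_sum_cong:
  assumes "cong_mod RHA 1 xs ys"
  shows "(\<Sum>(g, c)\<leftarrow>xs. c * \<pi> g b) = (\<Sum>(g, c)\<leftarrow>ys. c * \<pi> g b)"
proof -
  have "(\<Sum>p\<leftarrow>xs. (\<lambda>(g, c). c * \<pi> g b) p) = (\<Sum>p\<leftarrow>ys. (\<lambda>(g, c). c * \<pi> g b) p)"
    using assms[folded tensor2_eq_UNIV]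
    by (rule A.sum_list_eq_if_tensor2_eq[rotated 4])
       (auto simp: distrib_left distrib_right pi_add_left pi_scale_left sA_mult[symmetric])
  then show ?thesis
    by simp
qed

lemma twprod_sum_list_left: "twprod (\<Sum>x\<leftarrow>l. f x) b = (\<Sum>x\<leftarrow>l. twprod (f x) b)"
proof (induction l)
  case Nil
  then show ?case
    using twisted_sum_cong[OF psi_zero] by (simp add: twisted_prod_def)
next
  case (Cons x l)
  then show ?case
    using twisted_sum_cong[OF psi_add] by (simp add: twisted_prod_def)
qed

lemma twprod_sum_list_right: "twprod a (\<Sum>x\<leftarrow>l. f x) = (\<Sum>x\<leftarrow>l. twprod a (f x))"
  by (induction l)
     (simp_all add: twisted_prod_def pi_zero pi_add distrib_left case_prod_unfold sum_list_addf)

lemma pi_mult_AH: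
  assumes "n \<in> AH"
  shows "\<pi> g (m * n) = \<pi> g m * n"
proof -
  have "\<pi> g (m * n) = (\<Sum>(g1, g2)\<leftarrow>\<Delta> g. sA (\<epsilon> g2) (\<pi> g1 m) * n)"
    using assms by (simp add: pi_mult mem_AH_iff sA_mult(2)[symmetric] sA_mult(1))
  also have "\<dots> = (\<Sum>(g1, g2)\<leftarrow>\<Delta> g. sA (\<epsilon> g2) (\<pi> g1 m)) * n"
    by (simp add: sum_list_mult_const case_prod_unfold)
  also have "(\<Sum>(g1, g2)\<leftarrow>\<Delta> g. sA (\<epsilon> g2) (\<pi> g1 m)) = \<pi> (\<Sum>(g1, g2)\<leftarrow>\<Delta> g. sH (\<epsilon> g2) g1) m"
    by (simp add: pi_sum_list_left case_prod_unfold pi_scale_left)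
  also have "(\<Sum>(g1, g2)\<leftarrow>\<Delta> g. sH (\<epsilon> g2) g1) = g"
    by (rule counit_right)
  finally show ?thesis .
qed

end

locale coaction_on_invariants = twisting_datum +
  fixes \<psi>'
  assumes coaction_AH: "\<forall>a\<in>invariants sA \<epsilon> \<pi>. set (\<psi>' a) \<subseteq> UNIV \<times> invariants sA \<epsilon> \<pi>
    \<and> tensor2_eq sH sA UNIV UNIV (\<psi>' a) (\<psi> a)"
begin

lemma set_psi': "a \<in> AH \<Longrightarrow> set (\<psi>' a) \<subseteq> UNIV \<times> AH"
  using coaction_AH by blast

lemma psi'_cong: "a \<in> AH \<Longrightarrow> cong_mod RHA 1 (\<psi>' a) (\<psi> a)"
  using coaction_AH by (simp add: tensor2_eq_UNIV)

lemma psi_cong': "a \<in> AH \<Longrightarrow> cong_mod RHA 1 (\<psi> a) (\<psi>' a)"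
  by (rule cong_mod_sym[OF psi'_cong])

lemma psi'_add:
  assumes "m \<in> AH" "n \<in> AH"
  shows "tensor2_eq sH sA UNIV AH (\<psi>' (m + n)) (\<psi>' m @ \<psi>' n)"
proof (rule tensor2_eq_AH_if_cong_mod)
  have "m + n \<in> AH"
    using assms subalgebra_AH unfolding subalgebra_def by blast
  then show "set (\<psi>' (m + n)) \<subseteq> UNIV \<times> AH"
    by (rule set_psi')
  show "set (\<psi>' m @ \<psi>' n) \<subseteq> UNIV \<times> AH"
    using assms set_psi' by auto
  have "cong_mod RHA 1 (\<psi>' (m + n)) (\<psi> (m + n))"
    by (rule psi'_cong) fact
  also have "cong_mod RHA 1 (\<psi> (m + n)) (\<psi> m @ \<psi> n)"
    by (rule psi_add)
  also have "cong_mod RHA 1 (\<psi> m @ \<psi> n) (\<psi>' m @ \<psi>' n)"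
    using assms by (simp add: cong_mod_append psi_cong')
  finally show "cong_mod RHA 1 (\<psi>' (m + n)) (\<psi>' m @ \<psi>' n)" .
qed

lemma psi'_scale:
  assumes "n \<in> AH"
  shows "tensor2_eq sH sA UNIV AH (\<psi>' (sA c n)) (map (\<lambda>(h, a). (sH c h, a)) (\<psi>' n))"
proof (rule tensor2_eq_AH_if_cong_mod)
  have "sA c n \<in> AH"
    using assms subalgebra_AH unfolding subalgebra_def by blast
  then show "set (\<psi>' (sA c n)) \<subseteq> UNIV \<times> AH"
    by (rule set_psi')
  show "set (map (\<lambda>(h, a). (sH c h, a)) (\<psi>' n)) \<subseteq> UNIV \<times> AH"
    using assms set_psi' by auto
  have "cong_mod RHA 1 (\<psi>' (sA c n)) (\<psi> (sA c n))"
    by (rule psi'_cong) fact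
  also have "cong_mod RHA 1 (\<psi> (sA c n)) (map (\<lambda>(h, a). (sH c h, a)) (\<psi> n))"
    by (rule psi_scale)
  also have "cong_mod RHA 1 (map (\<lambda>(h, a). (sH c h, a)) (\<psi> n)) (map (\<lambda>(h, a). (sH c h, a)) (\<psi>' n))"
    using psi_cong'[OF assms, folded tensor2_eq_UNIV]
    by (rule cong_mod_map_fst_if_tensor2_eq[rotated 3])
       (auto simp: H.scale_right_distrib mult.commute)
  finally show "cong_mod RHA 1 (\<psi>' (sA c n)) (map (\<lambda>(h, a). (sH c h, a)) (\<psi>' n))" .
qed

lemma psi'_coassoc:
  assumes n: "n \<in> AH"
  shows "tensor3_eq sH sH sA UNIV UNIV AH
    [(h, g, b). (h, a) \<leftarrow> \<psi>' n, (g, b) \<leftarrow> \<psi>' a] [(h1, h2, a). (h, a) \<leftarrow> \<psi>' n, (h1, h2) \<leftarrow> \<Delta> h]"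
  unfolding concat_map_tensor_left concat_map_tensor_right
proof (rule tensor3_eq_AH_if_cong_mod)
  show "set (concat (map (\<lambda>(h, a). tensor_left h (\<psi>' a)) (\<psi>' n))) \<subseteq> UNIV \<times> UNIV \<times> AH"
    using set_psi'[OF n] set_psi' by (fastforce simp: tensor_left_def)
  show "set (concat (map (\<lambda>(h, a). tensor_right (\<Delta> h) a) (\<psi>' n))) \<subseteq> UNIV \<times> UNIV \<times> AH"
    using set_psi'[OF n] by (force simp: tensor_right_def)
  have "cong_mod RHHA 1 (concat (map (\<lambda>(h, a). tensor_left h (\<psi>' a)) (\<psi>' n)))
      (concat (map (\<lambda>(h, a). tensor_left h (\<psi> a)) (\<psi>' n)))"
    using set_psi'[OF n] by (intro cong_mod_concat_map) (auto intro: tensor_left_cong psi'_cong)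
  also have "cong_mod RHHA 1 \<dots> (concat (map (\<lambda>(h, a). tensor_left h (\<psi> a)) (\<psi> n)))"
    by (rule id_tensor_psi_cong[OF psi'_cong[OF n]])
  also have "cong_mod RHHA 1 \<dots> (concat (map (\<lambda>(h, a). tensor_right (\<Delta> h) a) (\<psi> n)))"
    using psi_coassoc[of n] unfolding concat_map_tensor_left concat_map_tensor_right .
  also have "cong_mod RHHA 1 \<dots> (concat (map (\<lambda>(h, a). tensor_right (\<Delta> h) a) (\<psi>' n)))"
    by (rule Delta_tensor_id_cong[OF psi_cong'[OF n]])
  finally show "cong_mod RHHA 1 (concat (map (\<lambda>(h, a). tensor_left h (\<psi>' a)) (\<psi>' n)))
      (concat (map (\<lambda>(h, a). tensor_right (\<Delta> h) a) (\<psi>' n)))" .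
qed

lemma psi'_counit:
  assumes "n \<in> AH"
  shows "(\<Sum>(h, a)\<leftarrow>\<psi>' n. sA (\<epsilon> h) a) = n"
proof -
  have "(\<Sum>p\<leftarrow>\<psi>' n. (\<lambda>(h, a). sA (\<epsilon> h) a) p) = (\<Sum>p\<leftarrow>\<psi> n. (\<lambda>(h, a). sA (\<epsilon> h) a) p)"
    using psi'_cong[OF assms, folded tensor2_eq_UNIV]
    by (rule A.sum_list_eq_if_tensor2_eq[rotated 4])
       (auto simp: eps_add eps_scale A.scale_left_distrib A.scale_right_distrib)
  then show ?thesis
    using psi_counit[of n] by simp
qed

lemma psi'_mult:
  assumes "m \<in> AH" "n \<in> AH"
  shows "tensor2_eq sH sA UNIV AH (\<psi>' (m * n)) (tensor_mult (\<psi>' m) (\<psi>' n))"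
proof (rule tensor2_eq_AH_if_cong_mod)
  show "set (\<psi>' (m * n)) \<subseteq> UNIV \<times> AH"
    using assms by (intro set_psi' AH_mult)
  show "set (tensor_mult (\<psi>' m) (\<psi>' n)) \<subseteq> UNIV \<times> AH"
    using assms set_psi' by (fastforce simp: tensor_mult_def intro: AH_mult)
  have "cong_mod RHA 1 (\<psi>' (m * n)) (\<psi> (m * n))"
    using assms by (intro psi'_cong AH_mult)
  also have "cong_mod RHA 1 (\<psi> (m * n)) (tensor_mult (\<psi> m) (\<psi> n))"
    by (rule psi_mult)
  also have "cong_mod RHA 1 (tensor_mult (\<psi> m) (\<psi> n)) (tensor_mult (\<psi>' m) (\<psi>' n))"
    using assms by (simp add: tensor_mult_cong psi_cong')
  finally show "cong_mod RHA 1 (\<psi>' (m * n)) (tensor_mult (\<psi>' m) (\<psi>' n))" .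
qed

lemma psi'_one: "tensor2_eq sH sA UNIV AH (\<psi>' 1) [(1, 1)]"
proof -
  have "1 \<in> AH"
    by (simp add: mem_AH_iff pi_unit)
  then show ?thesis
    using cong_mod_trans_one[OF psi'_cong psi_one]
    by (intro tensor2_eq_AH_if_cong_mod) (simp_all add: set_psi')
qed

lemma comodule_algebra_AH: "comodule_algebra sH \<Delta> \<epsilon> sA AH \<psi>'"
  unfolding comodule_algebra_def tensor_mult_eq
  using set_psi' psi'_add psi'_scale psi'_coassoc psi'_counit psi'_mult psi'_one by blast

lemma twprod_mult_mult:
  assumes comm: "\<forall>a\<in>Aco. \<forall>b\<in>AH. a * b = b * a"
    and m: "m \<in> Aco" and n: "n \<in> AH" and m': "m' \<in> Aco" and n': "n' \<in> AH"
  shows "twprod (m * n) (m' * n') = (\<Sum>(g, c)\<leftarrow>\<psi>' n. m * \<pi> g m' * (c * n'))"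
proof -
  have "cong_mod RHA 1 (\<psi> (m * n)) (tensor_mult (\<psi> m) (\<psi> n))"
    by (rule psi_mult)
  also have "cong_mod RHA 1 (tensor_mult (\<psi> m) (\<psi> n)) (tensor_mult [(1, m)] (\<psi>' n))"
    using m psi_cong'[OF n] unfolding mem_Aco_iff by (rule tensor_mult_cong)
  finally have "cong_mod RHA 1 (\<psi> (m * n)) (map (\<lambda>(g, b). (g, m * b)) (\<psi>' n))"
    by (simp add: tensor_mult_def)
  then have "twprod (m * n) (m' * n')
      = (\<Sum>(g, c)\<leftarrow>map (\<lambda>(g, b). (g, m * b)) (\<psi>' n). c * \<pi> g (m' * n'))"
    unfolding twisted_prod_def by (rule twisted_sum_cong)
  also have "\<dots> = (\<Sum>(g, b)\<leftarrow>\<psi>' n. m * b * (\<pi> g m' * n'))"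
    using n' by (simp add: pi_mult_AH case_prod_unfold o_def)
  also have "\<dots> = (\<Sum>(g, b)\<leftarrow>\<psi>' n. m * \<pi> g m' * (b * n'))"
  proof (intro arg_cong[where f = sum_list] map_cong refl, clarify)
    fix g b
    assume "(g, b) \<in> set (\<psi>' n)"
    then have "\<pi> g m' * b = b * \<pi> g m'"
      using comm set_psi'[OF n] pi_Aco[OF m'] by auto
    then show "m * b * (\<pi> g m' * n') = m * \<pi> g m' * (b * n')"
      by (metis mult.assoc)
  qed
  finally show ?thesis .
qed

lemma mult_map_smash_mult:
  assumes comm: "\<forall>a\<in>Aco. \<forall>b\<in>AH. a * b = b * a"
    and xs: "set xs \<subseteq> Aco \<times> AH" and ys: "set ys \<subseteq> Aco \<times> AH"
  shows "mult_map (smash_mult \<pi> \<psi>' xs ys) = twprod (mult_map xs) (mult_map ys)"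
proof -
  have "twprod (mult_map xs) (mult_map ys) = (\<Sum>(m, n)\<leftarrow>xs. \<Sum>(m', n')\<leftarrow>ys. twprod (m * n) (m' * n'))"
    unfolding mult_map_def
    by (simp only: twprod_sum_list_left) (simp add: twprod_sum_list_right case_prod_unfold)
  also have "\<dots> = (\<Sum>(m, n)\<leftarrow>xs. \<Sum>(m', n')\<leftarrow>ys. \<Sum>(g, c)\<leftarrow>\<psi>' n. m * \<pi> g m' * (c * n'))"
  proof (intro arg_cong[where f = sum_list] map_cong refl, clarify)
    fix m n
    assume "(m, n) \<in> set xs"
    then have "m \<in> Aco" "n \<in> AH"
      using xs by auto
    then show "(\<Sum>(m', n')\<leftarrow>ys. twprod (m * n) (m' * n'))
        = (\<Sum>(m', n')\<leftarrow>ys. \<Sum>(g, c)\<leftarrow>\<psi>' n. m * \<pi> g m' * (c * n'))"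
      using ys by (intro arg_cong[where f = sum_list] map_cong refl)
        (auto intro: twprod_mult_mult[OF comm])
  qed
  also have "\<dots> = mult_map (smash_mult \<pi> \<psi>' xs ys)"
    by (simp add: smash_mult_def mult_map_def case_prod_unfold sum_list_concat o_def map_concat)
  finally show ?thesis ..
qed

end

theorem proposition4p9:
  fixes sH :: "'k::field \<Rightarrow> 'h::ring_1 \<Rightarrow> 'h"
    and sA :: "'k \<Rightarrow> 'a::ring_1 \<Rightarrow> 'a"
    and \<Delta> :: "'h \<Rightarrow> ('h \<times> 'h) list"
    and \<epsilon> :: "'h \<Rightarrow> 'k"
    and \<pi> :: "'h \<Rightarrow> 'a \<Rightarrow> 'a"
    and \<psi> :: "'a \<Rightarrow> ('h \<times> 'a) list"
  assumes tw: "left_twisting_datum sH \<Delta> \<epsilon> sA \<pi> \<psi>"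
  shows
    "subalgebra sA (invariants sA \<epsilon> \<pi>)
     \<and> (\<exists>\<psi>'. \<forall>a\<in>invariants sA \<epsilon> \<pi>. set (\<psi>' a) \<subseteq> UNIV \<times> invariants sA \<epsilon> \<pi>
                \<and> tensor2_eq sH sA UNIV UNIV (\<psi>' a) (\<psi> a))
     \<and> (\<forall>\<psi>'. (\<forall>a\<in>invariants sA \<epsilon> \<pi>. set (\<psi>' a) \<subseteq> UNIV \<times> invariants sA \<epsilon> \<pi>
                \<and> tensor2_eq sH sA UNIV UNIV (\<psi>' a) (\<psi> a))
            \<longrightarrow> comodule_algebra sH \<Delta> \<epsilon> sA (invariants sA \<epsilon> \<pi>) \<psi>')
     \<and> subalgebra sA (coinvariants sH sA \<psi>)
     \<and> module_algebra sH \<Delta> \<epsilon> sA (coinvariants sH sA \<psi>) \<pi>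
     \<and> ((\<forall>a\<in>coinvariants sH sA \<psi>. \<forall>b\<in>invariants sA \<epsilon> \<pi>. a * b = b * a) \<longrightarrow>
          (\<forall>\<psi>'. (\<forall>a\<in>invariants sA \<epsilon> \<pi>. set (\<psi>' a) \<subseteq> UNIV \<times> invariants sA \<epsilon> \<pi>
                    \<and> tensor2_eq sH sA UNIV UNIV (\<psi>' a) (\<psi> a))
             \<longrightarrow> (\<forall>xs ys. tensor2_eq sA sA (coinvariants sH sA \<psi>) (invariants sA \<epsilon> \<pi>) xs ys
                          \<longrightarrow> mult_map xs = mult_map ys)
               \<and> mult_map [(1, 1)] = 1
               \<and> (\<forall>xs ys. set xs \<subseteq> coinvariants sH sA \<psi> \<times> invariants sA \<epsilon> \<pi>
                     \<longrightarrow> set ys \<subseteq> coinvariants sH sA \<psi> \<times> invariants sA \<epsilon> \<pi>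
                     \<longrightarrow> mult_map (smash_mult \<pi> \<psi>' xs ys)
                         = twisted_prod \<pi> \<psi> (mult_map xs) (mult_map ys))))"
proof -
  interpret twisting_datum sH sA \<Delta> \<epsilon> \<pi> \<psi>
    by (rule twisting_datum.intro[OF tw])
  have comodule: "comodule_algebra sH \<Delta> \<epsilon> sA AH \<psi>'"
    and smash: "\<forall>a\<in>Aco. \<forall>b\<in>AH. a * b = b * a \<Longrightarrow> set xs \<subseteq> Aco \<times> AH \<Longrightarrow> set ys \<subseteq> Aco \<times> AH \<Longrightarrow>
      mult_map (smash_mult \<pi> \<psi>' xs ys) = twprod (mult_map xs) (mult_map ys)"
    if "\<forall>a\<in>AH. set (\<psi>' a) \<subseteq> UNIV \<times> AH \<and> tensor2_eq sH sA UNIV UNIV (\<psi>' a) (\<psi> a)" for \<psi>' xs ys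
  proof -
    interpret coaction_on_invariants sH sA \<Delta> \<epsilon> \<pi> \<psi> \<psi>'
      using that by unfold_locales
    show "comodule_algebra sH \<Delta> \<epsilon> sA AH \<psi>'"
      by (rule comodule_algebra_AH)
    show "mult_map (smash_mult \<pi> \<psi>' xs ys) = twprod (mult_map xs) (mult_map ys)"
      if "\<forall>a\<in>Aco. \<forall>b\<in>AH. a * b = b * a" "set xs \<subseteq> Aco \<times> AH" "set ys \<subseteq> Aco \<times> AH"
      using that by (rule mult_map_smash_mult)
  qed
  show ?thesis
    using subalgebra_AH ex_coaction_AH comodule subalgebra_Aco module_algebra_Aco smash
      mult_map_eq_if_tensor2_eq[OF k_algebra_A]
    by (simp add: mult_map_def)
qed

end
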